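(* Let $n\ge2$ and $s\le\frac n2-1$. Then for every real $b<\frac12$ there is no constant $C$ such that $$\|f\bar gh\|_{X^{s,-b}}\le C\|f\|_{X^{s,b}}\|g\|_{X^{s,b}}\|h\|_{X^{s,b}}$$ holds for all $f,g,h\in X^{s,b}(\mathbb{R}^{n+1})$.
   Context: For $u$ on $\mathbb{R}^n\times\mathbb{R}$ with space-time Fourier transform $\widehat u(\xi,\tau)$: $\|u\|_{X^{s,b}}^2=\int_{\mathbb{R}^{n+1}}(1+|\xi|)^{2s}(1+|\tau+|\xi|^2|)^{2b}|\widehat u(\xi,\tau)|^2d\xi d\tau$. $\bar g$ denotes complex conjugation. *)

theory Defs
  imports "HOL-Analysis.Analysis"
begin

text \<open>Space-time Fourier transform on R^n x R (n = CARD('n)):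
  hat u (xi, tau) = integral of exp(-i (x . xi + t tau)) u(x,t) d(x,t).
  Normalisation constants are irrelevant for the (non-)existence of C.\<close>
definition st_fourier :: "((real^'n) \<times> real \<Rightarrow> complex) \<Rightarrow> (real^'n) \<times> real \<Rightarrow> complex" where
  "st_fourier u = (\<lambda>(\<xi>, \<tau>). \<integral>z. exp (- \<i> * complex_of_real (fst z \<bullet> \<xi> + snd z * \<tau>)) * u z \<partial>lborel)"

text \<open>Squared X^{s,b} norm, as an extended nonnegative real (infinite if u is not in X^{s,b}).\<close>
definition Xsb_sq :: "real \<Rightarrow> real \<Rightarrow> ((real^'n) \<times> real \<Rightarrow> complex) \<Rightarrow> ennreal" where
  "Xsb_sq s b u = nn_integral lborel (\<lambda>w. ennreal ((1 + norm (fst w)) powr (2 * s)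
        * (1 + \<bar>snd w + (norm (fst w))\<^sup>2\<bar>) powr (2 * b)
        * (cmod (st_fourier u w))\<^sup>2))"

text \<open>Admissible test functions: integrable, bounded, and in X^{s,b}.
  For such f g h the product f conj(g) h is integrable, so its Fourier transform is classical.\<close>
definition admissible :: "real \<Rightarrow> real \<Rightarrow> ((real^'n) \<times> real \<Rightarrow> complex) \<Rightarrow> bool" where
  "admissible s b u \<longleftrightarrow> integrable lborel u \<and> (\<exists>M. \<forall>z. cmod (u z) \<le> M) \<and> Xsb_sq s b u < \<infinity>"

end

theory Submission
  imports Defs "HOL-Probability.Characteristic_Functions"
begin

text \<open>
  Counterexample by Gaussian wave packets. For \<open>N \<ge> 1\<close> and a fixed \<open>\<kappa> > 1\<close> let \<open>u\<^sub>N\<close> have as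
  Fourier transform a Gaussian centred at the point \<open>(k, -|k|\<^sup>2)\<close> of the paraboloid \<open>\<tau> = -|\<xi>|\<^sup>2\<close>,
  where \<open>k = N\<^sup>\<kappa> (1, \<dots>, 1)\<close>, with width \<open>N\<close> in \<open>\<xi>\<close> and \<open>N\<^bsup>\<kappa>+1\<^esup>\<close> in \<open>\<tau>\<close>. Then \<open>|u\<^sub>N|\<^sup>2 u\<^sub>N\<close> is a
  packet of the same kind, and on the bulk of these packets \<open>(1 + |\<xi>|)\<^bsup>2s\<^esup> \<approx> N\<^bsup>2s\<kappa>\<^esup>\<close> and
  \<open>1 + |\<tau> + |\<xi>|\<^sup>2| \<approx> N\<^bsup>\<kappa>+1\<^esup>\<close>. Hence the squared \<open>X\<^bsup>s,b\<^esup>\<close> norm of \<open>u\<^sub>N\<close> is \<open>O(N\<^sup>q)\<close>, while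
  the squared \<open>X\<^bsup>s,-b\<^esup>\<close> norm of \<open>|u\<^sub>N|\<^sup>2 u\<^sub>N\<close> is at least of order \<open>N\<^sup>p\<close> (\<open>q\<close> and \<open>p\<close> are
  \<open>norm_exponent\<close> and \<open>cube_exponent\<close> below), so a trilinear estimate would force \<open>p \<le> 3q\<close>.
  At \<open>\<kappa> = 1\<close> one has \<open>p - 3q = 2n + 4 - 4s - 4b - 12 max b 0\<close>, which is positive when
  \<open>s \<le> n/2 - 1\<close> and \<open>b < 1/2\<close>; so \<open>p > 3q\<close> also for \<open>\<kappa>\<close> slightly above 1. Taking \<open>\<kappa> > 1\<close>
  matters for \<open>s < 0\<close>: the Gaussian tail has to make the large weight near \<open>\<xi> = 0\<close> negligible,
  which needs \<open>|k| \<gg> N\<close>.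
\<close>

section \<open>Gaussian integrals\<close>

lemma sum_Basis_prod_split:
  fixes f :: "('a::euclidean_space \<times> 'b::euclidean_space) \<Rightarrow> 'c::comm_monoid_add"
  shows "(\<Sum>\<beta>\<in>Basis. f \<beta>) = (\<Sum>i\<in>Basis. f (i, 0)) + (\<Sum>j\<in>Basis. f (0, j))"
proof -
  have "inj_on (\<lambda>u. (u::'a, 0::'b)) Basis" "inj_on (\<lambda>u. (0::'a, u::'b)) Basis"
    by (auto intro!: inj_onI)
  then show ?thesis
    unfolding Basis_prod_def by (subst sum.union_disjoint) (auto simp: sum.reindex)
qed

lemma prod_Basis_prod_split:
  fixes f :: "('a::euclidean_space \<times> 'b::euclidean_space) \<Rightarrow> 'c::comm_monoid_mult"
  shows "(\<Prod>\<beta>\<in>Basis. f \<beta>) = (\<Prod>i\<in>Basis. f (i, 0)) * (\<Prod>j\<in>Basis. f (0, j))"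
proof -
  have "inj_on (\<lambda>u. (u::'a, 0::'b)) Basis" "inj_on (\<lambda>u. (0::'a, u::'b)) Basis"
    by (auto intro!: inj_onI)
  then show ?thesis
    unfolding Basis_prod_def by (subst prod.union_disjoint) (auto simp: prod.reindex)
qed

lemma norm_power2_eq_sum_Basis: "(norm (x::'a::euclidean_space))\<^sup>2 = (\<Sum>i\<in>Basis. (x \<bullet> i)\<^sup>2)"
  unfolding power2_norm_eq_inner by (subst euclidean_inner) (simp add: power2_eq_square)

lemma norm_power2_le_DIM:
  fixes x :: "'a::euclidean_space" and R :: real
  assumes "\<And>i. i \<in> Basis \<Longrightarrow> \<bar>x \<bullet> i\<bar> \<le> R"
  shows "(norm x)\<^sup>2 \<le> DIM('a) * R\<^sup>2"
proof -
  have "(norm x)\<^sup>2 = (\<Sum>i\<in>Basis. \<bar>x \<bullet> i\<bar>\<^sup>2)" by (simp add: norm_power2_eq_sum_Basis)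
  also have "\<dots> \<le> (\<Sum>i\<in>(Basis::'a set). R\<^sup>2)"
    using assms by (intro sum_mono power_mono) auto
  finally show ?thesis by simp
qed

lemma lborel_integral_prod_Basis:
  fixes g :: "'a::euclidean_space \<Rightarrow> real \<Rightarrow> complex"
  assumes int: "\<And>b. b \<in> Basis \<Longrightarrow> integrable lborel (g b)"
  shows "integrable lborel (\<lambda>z::'a. \<Prod>b\<in>Basis. g b (z \<bullet> b))"
    and "(\<integral>z. (\<Prod>b\<in>Basis. g b (z \<bullet> b)) \<partial>lborel) = (\<Prod>b\<in>Basis. \<integral>y. g b y \<partial>lborel)"
proof -
  interpret product_sigma_finite "\<lambda>_::'a. lborel::real measure" by standard
  let ?\<phi> = "\<lambda>f::'a\<Rightarrow>real. \<Sum>b\<in>Basis. f b *\<^sub>R b"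
  have \<phi>_measurable[measurable]: "?\<phi> \<in> measurable (\<Pi>\<^sub>M b\<in>Basis. lborel) borel" by measurable
  have g_measurable[measurable]: "b \<in> Basis \<Longrightarrow> g b \<in> borel_measurable borel" for b
    using int[of b] by (auto dest: borel_measurable_integrable)
  have prod_measurable: "(\<lambda>z::'a. \<Prod>b\<in>Basis. g b (z \<bullet> b)) \<in> borel_measurable borel"
    by (intro borel_measurable_prod) (auto intro: measurable_compose[OF _ g_measurable])
  have comp: "f \<in> space (\<Pi>\<^sub>M b\<in>Basis. lborel) \<Longrightarrow>
      (\<Prod>b\<in>Basis. g b (?\<phi> f \<bullet> b)) = (\<Prod>b\<in>Basis. g b (f b))" for f
    by (intro prod.cong refl) (simp add: inner_sum_left inner_Basis if_distrib sum.delta cong: if_cong)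
  have "integrable (\<Pi>\<^sub>M b\<in>Basis. lborel) (\<lambda>f. \<Prod>b\<in>Basis. g b (f b))"
    by (rule product_integrable_prod) (auto intro: int)
  then show "integrable lborel (\<lambda>z::'a. \<Prod>b\<in>Basis. g b (z \<bullet> b))"
    by (subst lborel_eq, subst integrable_distr_eq[OF \<phi>_measurable prod_measurable])
      (simp add: Bochner_Integration.integrable_cong[OF refl comp])
  have "(\<integral>z. (\<Prod>b\<in>Basis. g b (z \<bullet> b)) \<partial>lborel)
      = (\<integral>f. (\<Prod>b\<in>Basis. g b (?\<phi> f \<bullet> b)) \<partial>(\<Pi>\<^sub>M b\<in>Basis. lborel))"
    by (subst lborel_eq) (rule integral_distr[OF \<phi>_measurable prod_measurable])
  also have "\<dots> = (\<integral>f. (\<Prod>b\<in>Basis. g b (f b)) \<partial>(\<Pi>\<^sub>M b\<in>Basis. lborel))"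
    by (rule Bochner_Integration.integral_cong) (simp_all add: comp)
  also have "\<dots> = (\<Prod>b\<in>Basis. \<integral>y. g b y \<partial>lborel)"
    by (rule product_integral_prod) (auto intro: int)
  finally show "(\<integral>z. (\<Prod>b\<in>Basis. g b (z \<bullet> b)) \<partial>lborel) = (\<Prod>b\<in>Basis. \<integral>y. g b y \<partial>lborel)" .
qed

lemma gaussian_fourier_1d:
  assumes d: "d > 0"
  shows "integrable lborel (\<lambda>y. exp (\<i> * complex_of_real (y * \<eta>)) * complex_of_real (exp (- d * y\<^sup>2 / 2)))"
    and "(\<integral>y. exp (\<i> * complex_of_real (y * \<eta>)) * complex_of_real (exp (- d * y\<^sup>2 / 2)) \<partial>lborel)
        = complex_of_real (sqrt (2 * pi / d) * exp (- \<eta>\<^sup>2 / (2 * d)))"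
proof -
  let ?f = "\<lambda>y. exp (\<i> * complex_of_real (y * \<eta>)) * complex_of_real (exp (- d * y\<^sup>2 / 2))"
  have density: "exp (- d * y\<^sup>2 / 2) = sqrt (2 * pi / d) * normal_density 0 (1 / sqrt d) y" for y
    using d by (simp add: normal_density_def power_divide real_sqrt_divide field_simps)
  have "integrable lborel (\<lambda>y. sqrt (2 * pi / d) * normal_density 0 (1 / sqrt d) y)"
    using d by (intro integrable_mult_right integrable_normal_density) auto
  then have "integrable lborel (\<lambda>y::real. exp (- d * y\<^sup>2 / 2))"
    by (simp only: density)
  then show "integrable lborel ?f"
    by (rule Bochner_Integration.integrable_bound) (auto simp: norm_mult)
  have char: "(\<integral>x. std_normal_density x *\<^sub>R iexp (t * x) \<partial>lborel) = complex_of_real (exp (- t\<^sup>2 / 2))" for t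
  proof -
    have "char std_normal_distribution t = complex_of_real (exp (- t\<^sup>2 / 2))"
      by (simp add: char_std_normal_distribution)
    then show ?thesis unfolding char_def by (subst (asm) integral_density) auto
  qed
  have "1 / sqrt d \<noteq> 0" using d by simp
  then have "(\<integral>y. ?f y \<partial>lborel) = \<bar>1 / sqrt d\<bar> *\<^sub>R (\<integral>x. ?f (0 + (1 / sqrt d) * x) \<partial>lborel)"
    by (rule lborel_integral_real_affine)
  also have "(\<lambda>x. ?f (0 + (1 / sqrt d) * x))
      = (\<lambda>x. sqrt (2 * pi) *\<^sub>R (std_normal_density x *\<^sub>R iexp ((\<eta> / sqrt d) * x)))"
  proof
    fix x
    have "d * (x / sqrt d)\<^sup>2 = x\<^sup>2" using d by (simp add: power_divide)
    then show "?f (0 + (1 / sqrt d) * x) = sqrt (2 * pi) *\<^sub>R (std_normal_density x *\<^sub>R iexp ((\<eta> / sqrt d) * x))"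
      unfolding std_normal_density_def
      by (simp add: scaleR_conv_of_real mult.commute mult.left_commute mult.assoc)
  qed
  also have "(\<integral>x. sqrt (2 * pi) *\<^sub>R (std_normal_density x *\<^sub>R iexp ((\<eta> / sqrt d) * x)) \<partial>lborel)
      = sqrt (2 * pi) *\<^sub>R complex_of_real (exp (- (\<eta> / sqrt d)\<^sup>2 / 2))"
    by (simp only: integral_scaleR_right char)
  finally show "(\<integral>y. ?f y \<partial>lborel) = complex_of_real (sqrt (2 * pi / d) * exp (- \<eta>\<^sup>2 / (2 * d)))"
    using d by (simp add: scaleR_conv_of_real power_divide real_sqrt_divide field_simps)
qed

lemma nn_integral_gaussian_1d:
  assumes d: "d > 0"
  shows "(\<integral>\<^sup>+y. ennreal (exp (- (y - m)\<^sup>2 / (2 * d))) \<partial>lborel) = ennreal (sqrt (2 * pi * d))"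
proof -
  have density: "exp (- (y - m)\<^sup>2 / (2 * d)) = sqrt (2 * pi * d) * normal_density m (sqrt d) y" for y
    using d by (simp add: normal_density_def)
  have "(\<integral>\<^sup>+y. ennreal (normal_density m (sqrt d) y) \<partial>lborel) = 1"
    using d by (subst nn_integral_eq_integral) auto
  then show ?thesis
    unfolding density using d by (simp add: ennreal_mult nn_integral_cmult)
qed

section \<open>Wave packets\<close>

definition wave_packet :: "real \<Rightarrow> real \<Rightarrow> real^'n \<Rightarrow> real \<Rightarrow> (real^'n) \<times> real \<Rightarrow> complex" where
  "wave_packet a c k w = (\<lambda>z. exp (\<i> * complex_of_real (fst z \<bullet> k + snd z * w))
      * complex_of_real (exp (- (a * (norm (fst z))\<^sup>2 + c * (snd z)\<^sup>2) / 2)))"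

lemma norm_wave_packet_le_1:
  assumes "a \<ge> 0" "c \<ge> 0"
  shows "cmod (wave_packet a c k w z) \<le> 1"
proof -
  have "0 \<le> a * (norm (fst z))\<^sup>2 + c * (snd z)\<^sup>2" using assms by simp
  then show ?thesis unfolding wave_packet_def by (simp add: norm_mult del: of_real_add of_real_mult)
qed

lemma wave_packet_cube:
  "wave_packet a c k w z * cnj (wave_packet a c k w z) * wave_packet a c k w z = wave_packet (3 * a) (3 * c) k w z"
proof -
  define E where "E = exp (\<i> * complex_of_real (fst z \<bullet> k + snd z * w))"
  define q where "q = a * (norm (fst z))\<^sup>2 + c * (snd z)\<^sup>2"
  have "cmod E = 1" unfolding E_def by (rule norm_exp_i_times)
  then have E_cnj: "E * cnj E = 1" by (metis complex_norm_square of_real_1 power_one)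
  have "exp (- q / 2) * exp (- q / 2) * exp (- q / 2) = exp (- (3 * q) / 2)"
    by (simp add: exp_add[symmetric])
  moreover have "wave_packet (3 * a) (3 * c) k w z = E * complex_of_real (exp (- (3 * q) / 2))"
    unfolding wave_packet_def E_def q_def by (simp add: algebra_simps)
  moreover have "wave_packet a c k w z * cnj (wave_packet a c k w z) * wave_packet a c k w z
      = (E * cnj E) * E * complex_of_real (exp (- q / 2) * exp (- q / 2) * exp (- q / 2))"
    unfolding wave_packet_def E_def[symmetric] q_def[symmetric] by (simp add: mult_ac)
  ultimately show ?thesis unfolding E_cnj by simp
qed

text \<open>Only used on the standard basis of \<open>\<real>\<^sup>n \<times> \<real>\<close>, where it is \<open>a\<close> on the space axes and \<open>c\<close> on
  the time axis.\<close>
definition axis_coeff :: "real \<Rightarrow> real \<Rightarrow> (real^'n) \<times> real \<Rightarrow> real" where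
  "axis_coeff a c \<beta> = a * (fst \<beta> \<bullet> fst \<beta>) + c * (snd \<beta> * snd \<beta>)"

lemma axis_coeff_pos:
  assumes "a > 0" "c > 0" "\<beta> \<in> Basis"
  shows "axis_coeff a c \<beta> > 0"
  using assms unfolding Basis_prod_def axis_coeff_def by auto

lemma gaussian_prod_Basis:
  fixes z \<kappa> :: "(real^'n) \<times> real"
  shows "exp (\<i> * complex_of_real (z \<bullet> \<kappa>)) * complex_of_real (exp (- (a * (norm (fst z))\<^sup>2 + c * (snd z)\<^sup>2) / 2))
     = (\<Prod>\<beta>\<in>Basis. exp (\<i> * complex_of_real ((z \<bullet> \<beta>) * (\<kappa> \<bullet> \<beta>)))
          * complex_of_real (exp (- axis_coeff a c \<beta> * (z \<bullet> \<beta>)\<^sup>2 / 2)))"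
proof -
  have "a * (norm (fst z))\<^sup>2 + c * (snd z)\<^sup>2 = (\<Sum>\<beta>\<in>Basis. axis_coeff a c \<beta> * (z \<bullet> \<beta>)\<^sup>2)"
    by (simp add: sum_Basis_prod_split axis_coeff_def inner_Pair_0 norm_power2_eq_sum_Basis sum_distrib_left)
  then have "exp (- (a * (norm (fst z))\<^sup>2 + c * (snd z)\<^sup>2) / 2)
      = (\<Prod>\<beta>\<in>Basis. exp (- axis_coeff a c \<beta> * (z \<bullet> \<beta>)\<^sup>2 / 2))"
    by (simp add: exp_sum[symmetric] sum_divide_distrib sum_negf[symmetric])
  moreover have "exp (\<i> * complex_of_real (z \<bullet> \<kappa>)) = (\<Prod>\<beta>\<in>Basis. exp (\<i> * complex_of_real ((z \<bullet> \<beta>) * (\<kappa> \<bullet> \<beta>))))"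
    by (simp add: euclidean_inner[of z \<kappa>] sum_distrib_left exp_sum[symmetric])
  ultimately show ?thesis by (simp add: prod.distrib)
qed

lemma prod_axis_coeff_gaussian:
  fixes \<kappa> :: "(real^'n) \<times> real"
  shows "(\<Prod>\<beta>\<in>Basis. sqrt (2 * pi / axis_coeff a c \<beta>) * exp (- (\<kappa> \<bullet> \<beta>)\<^sup>2 / (2 * axis_coeff a c \<beta>)))
    = sqrt (2 * pi / a) ^ CARD('n) * sqrt (2 * pi / c) * exp (- (norm (fst \<kappa>))\<^sup>2 / (2 * a) - (snd \<kappa>)\<^sup>2 / (2 * c))"
proof -
  have "(\<Prod>\<beta>\<in>Basis. sqrt (2 * pi / axis_coeff a c \<beta>) * exp (- (\<kappa> \<bullet> \<beta>)\<^sup>2 / (2 * axis_coeff a c \<beta>)))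
      = (\<Prod>i\<in>(Basis::(real^'n) set). sqrt (2 * pi / a) * exp (- (fst \<kappa> \<bullet> i)\<^sup>2 / (2 * a)))
          * (sqrt (2 * pi / c) * exp (- (snd \<kappa>)\<^sup>2 / (2 * c)))"
    by (simp add: prod_Basis_prod_split axis_coeff_def inner_Pair_0)
  also have "(\<Prod>i\<in>(Basis::(real^'n) set). sqrt (2 * pi / a) * exp (- (fst \<kappa> \<bullet> i)\<^sup>2 / (2 * a)))
      = sqrt (2 * pi / a) ^ CARD('n) * exp (\<Sum>i\<in>(Basis::(real^'n) set). - (fst \<kappa> \<bullet> i)\<^sup>2 / (2 * a))"
    by (simp add: prod.distrib exp_sum)
  also have "(\<Sum>i\<in>(Basis::(real^'n) set). - (fst \<kappa> \<bullet> i)\<^sup>2 / (2 * a)) = - (norm (fst \<kappa>))\<^sup>2 / (2 * a)"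
    by (simp add: norm_power2_eq_sum_Basis sum_divide_distrib sum_negf)
  also have "sqrt (2 * pi / a) ^ CARD('n) * exp (- (norm (fst \<kappa>))\<^sup>2 / (2 * a))
        * (sqrt (2 * pi / c) * exp (- (snd \<kappa>)\<^sup>2 / (2 * c)))
      = sqrt (2 * pi / a) ^ CARD('n) * sqrt (2 * pi / c)
        * exp (- (norm (fst \<kappa>))\<^sup>2 / (2 * a) - (snd \<kappa>)\<^sup>2 / (2 * c))"
    by (simp add: exp_diff exp_minus field_simps)
  finally show ?thesis .
qed

lemma fourier_gaussian:
  fixes \<kappa> :: "(real^'n) \<times> real"
  assumes a: "a > 0" and c: "c > 0"
  shows "integrable lborel (\<lambda>z. exp (\<i> * complex_of_real (z \<bullet> \<kappa>))
           * complex_of_real (exp (- (a * (norm (fst z))\<^sup>2 + c * (snd z)\<^sup>2) / 2)))"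
    and "(\<integral>z. exp (\<i> * complex_of_real (z \<bullet> \<kappa>))
           * complex_of_real (exp (- (a * (norm (fst z))\<^sup>2 + c * (snd z)\<^sup>2) / 2)) \<partial>lborel)
       = complex_of_real (sqrt (2 * pi / a) ^ CARD('n) * sqrt (2 * pi / c)
           * exp (- (norm (fst \<kappa>))\<^sup>2 / (2 * a) - (snd \<kappa>)\<^sup>2 / (2 * c)))"
proof -
  let ?g = "\<lambda>\<beta> y. exp (\<i> * complex_of_real (y * (\<kappa> \<bullet> \<beta>))) * complex_of_real (exp (- axis_coeff a c \<beta> * y\<^sup>2 / 2))"
  have int: "\<And>\<beta>. \<beta> \<in> Basis \<Longrightarrow> integrable lborel (?g \<beta>)"
    using axis_coeff_pos[OF a c] gaussian_fourier_1d(1) by blast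
  show "integrable lborel (\<lambda>z. exp (\<i> * complex_of_real (z \<bullet> \<kappa>))
           * complex_of_real (exp (- (a * (norm (fst z))\<^sup>2 + c * (snd z)\<^sup>2) / 2)))"
    unfolding gaussian_prod_Basis by (rule lborel_integral_prod_Basis(1)[OF int])
  have "(\<integral>z. exp (\<i> * complex_of_real (z \<bullet> \<kappa>))
           * complex_of_real (exp (- (a * (norm (fst z))\<^sup>2 + c * (snd z)\<^sup>2) / 2)) \<partial>lborel)
      = (\<Prod>\<beta>\<in>Basis. \<integral>y. ?g \<beta> y \<partial>lborel)"
    unfolding gaussian_prod_Basis by (rule lborel_integral_prod_Basis(2)[OF int])
  also have "\<dots> = (\<Prod>\<beta>\<in>Basis. complex_of_real (sqrt (2 * pi / axis_coeff a c \<beta>)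
                     * exp (- (\<kappa> \<bullet> \<beta>)\<^sup>2 / (2 * axis_coeff a c \<beta>))))"
    using axis_coeff_pos[OF a c] gaussian_fourier_1d(2) by (intro prod.cong) auto
  finally show "(\<integral>z. exp (\<i> * complex_of_real (z \<bullet> \<kappa>))
           * complex_of_real (exp (- (a * (norm (fst z))\<^sup>2 + c * (snd z)\<^sup>2) / 2)) \<partial>lborel)
       = complex_of_real (sqrt (2 * pi / a) ^ CARD('n) * sqrt (2 * pi / c)
           * exp (- (norm (fst \<kappa>))\<^sup>2 / (2 * a) - (snd \<kappa>)\<^sup>2 / (2 * c)))"
    by (simp only: of_real_prod[symmetric] prod_axis_coeff_gaussian)
qed

lemma integrable_wave_packet:
  assumes "a > 0" "c > 0"
  shows "integrable lborel (wave_packet a c k w)"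
proof -
  have "wave_packet a c k w = (\<lambda>z. exp (\<i> * complex_of_real (z \<bullet> (k, w)))
      * complex_of_real (exp (- (a * (norm (fst z))\<^sup>2 + c * (snd z)\<^sup>2) / 2)))"
    unfolding wave_packet_def by (auto simp: inner_prod_def)
  then show ?thesis using fourier_gaussian(1)[OF assms] by simp
qed

lemma st_fourier_wave_packet:
  fixes k :: "real^'n"
  assumes a: "a > 0" and c: "c > 0"
  shows "st_fourier (wave_packet a c k w) (\<xi>, \<tau>) = complex_of_real (sqrt (2 * pi / a) ^ CARD('n) * sqrt (2 * pi / c)
            * exp (- (norm (\<xi> - k))\<^sup>2 / (2 * a) - (\<tau> - w)\<^sup>2 / (2 * c)))"
proof -
  let ?\<kappa> = "(k - \<xi>, w - \<tau>)"
  have "exp (- \<i> * complex_of_real (fst z \<bullet> \<xi> + snd z * \<tau>)) * wave_packet a c k w z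
      = exp (\<i> * complex_of_real (z \<bullet> ?\<kappa>)) * complex_of_real (exp (- (a * (norm (fst z))\<^sup>2 + c * (snd z)\<^sup>2) / 2))" for z
  proof -
    have "exp (- \<i> * complex_of_real (fst z \<bullet> \<xi> + snd z * \<tau>)) * exp (\<i> * complex_of_real (fst z \<bullet> k + snd z * w))
        = exp (\<i> * complex_of_real (z \<bullet> ?\<kappa>))"
      by (cases z) (simp add: exp_add[symmetric] inner_diff_right algebra_simps)
    then show ?thesis unfolding wave_packet_def by (simp add: mult.assoc)
  qed
  then have "st_fourier (wave_packet a c k w) (\<xi>, \<tau>)
      = (\<integral>z. exp (\<i> * complex_of_real (z \<bullet> ?\<kappa>)) * complex_of_real (exp (- (a * (norm (fst z))\<^sup>2 + c * (snd z)\<^sup>2) / 2)) \<partial>lborel)"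
    unfolding st_fourier_def by simp
  also have "\<dots> = complex_of_real (sqrt (2 * pi / a) ^ CARD('n) * sqrt (2 * pi / c)
                     * exp (- (norm (fst ?\<kappa>))\<^sup>2 / (2 * a) - (snd ?\<kappa>)\<^sup>2 / (2 * c)))"
    by (rule fourier_gaussian(2)[OF a c])
  finally show ?thesis by (simp add: norm_minus_commute power2_commute)
qed

lemma norm_st_fourier_wave_packet:
  fixes k :: "real^'n"
  assumes a: "a > 0" and c: "c > 0"
  shows "(cmod (st_fourier (wave_packet a c k w) \<zeta>))\<^sup>2 = (2 * pi / a) ^ CARD('n) * (2 * pi / c)
            * exp (- (norm (fst \<zeta> - k))\<^sup>2 / a - (snd \<zeta> - w)\<^sup>2 / c)"
proof -
  obtain \<xi> \<tau> where \<zeta>: "\<zeta> = (\<xi>, \<tau>)" by (cases \<zeta>)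
  have "(exp (- (norm (\<xi> - k))\<^sup>2 / (2 * a) - (\<tau> - w)\<^sup>2 / (2 * c)))\<^sup>2
      = exp (- (norm (\<xi> - k))\<^sup>2 / a - (\<tau> - w)\<^sup>2 / c)"
    by (simp add: power2_eq_square exp_add[symmetric] field_simps)
  moreover have "(sqrt (2 * pi / a) ^ CARD('n))\<^sup>2 = (2 * pi / a) ^ CARD('n)"
    using a by (simp add: power_mult[symmetric] mult.commute[of _ 2] power_mult)
  moreover have "(sqrt (2 * pi / c))\<^sup>2 = 2 * pi / c" using c by simp
  ultimately show ?thesis
    unfolding \<zeta> st_fourier_wave_packet[OF a c] norm_of_real power2_abs power_mult_distrib by simp
qed

lemma nn_integral_gaussian:
  fixes k :: "real^'n"
  assumes a: "a > 0" and c: "c > 0"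
  shows "(\<integral>\<^sup>+\<zeta>. ennreal (exp (- (norm (fst \<zeta> - k))\<^sup>2 / (2 * a) - (snd \<zeta> - w)\<^sup>2 / (2 * c))) \<partial>lborel)
       = ennreal (sqrt (2 * pi * a) ^ CARD('n) * sqrt (2 * pi * c))"
proof -
  let ?f = "\<lambda>\<beta> y. ennreal (exp (- (y - (k, w) \<bullet> \<beta>)\<^sup>2 / (2 * axis_coeff a c \<beta>)))"
  have "ennreal (exp (- (norm (fst \<zeta> - k))\<^sup>2 / (2 * a) - (snd \<zeta> - w)\<^sup>2 / (2 * c)))
      = (\<Prod>\<beta>\<in>Basis. ?f \<beta> (\<zeta> \<bullet> \<beta>))" for \<zeta> :: "(real^'n) \<times> real"
  proof -
    have "(\<Sum>\<beta>\<in>Basis. - (\<zeta> \<bullet> \<beta> - (k, w) \<bullet> \<beta>)\<^sup>2 / (2 * axis_coeff a c \<beta>))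
        = (\<Sum>i\<in>(Basis::(real^'n) set). - ((fst \<zeta> - k) \<bullet> i)\<^sup>2 / (2 * a)) - (snd \<zeta> - w)\<^sup>2 / (2 * c)"
      by (simp add: sum_Basis_prod_split axis_coeff_def inner_Pair_0 inner_diff_left)
    also have "\<dots> = - (norm (fst \<zeta> - k))\<^sup>2 / (2 * a) - (snd \<zeta> - w)\<^sup>2 / (2 * c)"
      by (simp add: norm_power2_eq_sum_Basis sum_divide_distrib sum_negf)
    finally have "exp (- (norm (fst \<zeta> - k))\<^sup>2 / (2 * a) - (snd \<zeta> - w)\<^sup>2 / (2 * c))
        = (\<Prod>\<beta>\<in>Basis. exp (- (\<zeta> \<bullet> \<beta> - (k, w) \<bullet> \<beta>)\<^sup>2 / (2 * axis_coeff a c \<beta>)))"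
      by (simp add: exp_sum[symmetric])
    then show ?thesis by (simp add: prod_ennreal)
  qed
  then have "(\<integral>\<^sup>+\<zeta>. ennreal (exp (- (norm (fst \<zeta> - k))\<^sup>2 / (2 * a) - (snd \<zeta> - w)\<^sup>2 / (2 * c))) \<partial>lborel)
      = (\<integral>\<^sup>+\<zeta>. (\<Prod>\<beta>\<in>Basis. ?f \<beta> (\<zeta> \<bullet> \<beta>)) \<partial>lborel)"
    by simp
  also have "\<dots> = (\<Prod>\<beta>\<in>Basis. (\<integral>\<^sup>+y. ?f \<beta> y \<partial>lborel))"
    by (rule nn_integral_lborel_prod) auto
  also have "\<dots> = (\<Prod>\<beta>\<in>(Basis :: ((real^'n) \<times> real) set). ennreal (sqrt (2 * pi * axis_coeff a c \<beta>)))"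
    using nn_integral_gaussian_1d[OF axis_coeff_pos[OF a c]] by (intro prod.cong) auto
  also have "\<dots> = ennreal (\<Prod>\<beta>\<in>(Basis :: ((real^'n) \<times> real) set). sqrt (2 * pi * axis_coeff a c \<beta>))"
    by (rule prod_ennreal) (simp add: less_imp_le[OF axis_coeff_pos[OF a c]])
  also have "(\<Prod>\<beta>\<in>(Basis :: ((real^'n) \<times> real) set). sqrt (2 * pi * axis_coeff a c \<beta>))
      = sqrt (2 * pi * a) ^ CARD('n) * sqrt (2 * pi * c)"
    by (simp add: prod_Basis_prod_split axis_coeff_def)
  finally show ?thesis .
qed

section \<open>Bounds for the \<open>X\<^bsup>s,b\<^esup>\<close> norm of a wave packet\<close>

lemma gaussian_normalisation_product:
  fixes \<alpha> \<gamma> :: real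
  assumes \<alpha>: "\<alpha> > 0" and \<gamma>: "\<gamma> > 0"
  shows "(2 * pi / \<alpha>\<^sup>2) ^ m * (2 * pi / \<gamma>\<^sup>2) * (sqrt (2 * pi * \<alpha>\<^sup>2) ^ m * sqrt (2 * pi * \<gamma>\<^sup>2))
    = (2 * pi * sqrt (2 * pi)) ^ (m + 1) / (\<alpha> ^ m * \<gamma>)"
proof -
  have sqrt_eq: "sqrt (2 * pi * \<alpha>\<^sup>2) = sqrt (2 * pi) * \<alpha>" "sqrt (2 * pi * \<gamma>\<^sup>2) = sqrt (2 * pi) * \<gamma>"
    using \<alpha> \<gamma> by (simp_all add: real_sqrt_mult)
  have "(2 * pi / \<alpha>\<^sup>2) ^ m * (2 * pi / \<gamma>\<^sup>2) * (sqrt (2 * pi * \<alpha>\<^sup>2) ^ m * sqrt (2 * pi * \<gamma>\<^sup>2))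
      = ((2 * pi / \<alpha>\<^sup>2) * (sqrt (2 * pi) * \<alpha>)) ^ m * ((2 * pi / \<gamma>\<^sup>2) * (sqrt (2 * pi) * \<gamma>))"
    unfolding sqrt_eq power_mult_distrib by (simp only: mult_ac)
  also have "(2 * pi / \<alpha>\<^sup>2) * (sqrt (2 * pi) * \<alpha>) = 2 * pi * sqrt (2 * pi) / \<alpha>"
    using \<alpha> by (simp add: power2_eq_square)
  also have "(2 * pi / \<gamma>\<^sup>2) * (sqrt (2 * pi) * \<gamma>) = 2 * pi * sqrt (2 * pi) / \<gamma>"
    using \<gamma> by (simp add: power2_eq_square)
  finally show ?thesis by (simp add: power_divide)
qed

definition Xsb_weight :: "real \<Rightarrow> real \<Rightarrow> real^'n \<Rightarrow> real \<Rightarrow> real" where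
  "Xsb_weight s b \<xi> \<tau> = (1 + norm \<xi>) powr (2 * s) * (1 + \<bar>\<tau> + (norm \<xi>)\<^sup>2\<bar>) powr (2 * b)"

lemma Xsb_sq_eq_nn_integral_weight:
  "Xsb_sq s b u = (\<integral>\<^sup>+\<zeta>. ennreal (Xsb_weight s b (fst \<zeta>) (snd \<zeta>) * (cmod (st_fourier u \<zeta>))\<^sup>2) \<partial>lborel)"
  unfolding Xsb_sq_def Xsb_weight_def ..

lemma Xsb_weight_mult_norm_st_fourier_wave_packet_le:
  fixes k :: "real^'n" and \<zeta> :: "(real^'n) \<times> real"
  assumes \<alpha>: "\<alpha> > 0" and \<gamma>: "\<gamma> > 0"
    and weight_le: "Xsb_weight s b (fst \<zeta>) (snd \<zeta>)
      \<le> Q * exp ((norm (fst \<zeta> - k))\<^sup>2 / (2 * \<alpha>\<^sup>2) + (snd \<zeta> - w)\<^sup>2 / (2 * \<gamma>\<^sup>2))"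
  shows "Xsb_weight s b (fst \<zeta>) (snd \<zeta>) * (cmod (st_fourier (wave_packet (\<alpha>\<^sup>2) (\<gamma>\<^sup>2) k w) \<zeta>))\<^sup>2
    \<le> (2 * pi / \<alpha>\<^sup>2) ^ CARD('n) * (2 * pi / \<gamma>\<^sup>2) * Q
       * exp (- (norm (fst \<zeta> - k))\<^sup>2 / (2 * \<alpha>\<^sup>2) - (snd \<zeta> - w)\<^sup>2 / (2 * \<gamma>\<^sup>2))"
proof -
  define C0 where "C0 = (2 * pi / \<alpha>\<^sup>2) ^ CARD('n) * (2 * pi / \<gamma>\<^sup>2)"
  define G where "G = exp (- (norm (fst \<zeta> - k))\<^sup>2 / (2 * \<alpha>\<^sup>2) - (snd \<zeta> - w)\<^sup>2 / (2 * \<gamma>\<^sup>2))"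
  have \<alpha>2: "\<alpha>\<^sup>2 > 0" and \<gamma>2: "\<gamma>\<^sup>2 > 0" using \<alpha> \<gamma> by auto
  have fourier_sq: "(cmod (st_fourier (wave_packet (\<alpha>\<^sup>2) (\<gamma>\<^sup>2) k w) \<zeta>))\<^sup>2 = C0 * (G * G)"
    unfolding norm_st_fourier_wave_packet[OF \<alpha>2 \<gamma>2] C0_def G_def by (simp add: exp_add[symmetric] field_simps)
  \<comment> \<open>The weight is absorbed by one of the two factors \<open>G\<close>; the other one is integrated.\<close>
  have "exp ((norm (fst \<zeta> - k))\<^sup>2 / (2 * \<alpha>\<^sup>2) + (snd \<zeta> - w)\<^sup>2 / (2 * \<gamma>\<^sup>2)) * G = 1"
    unfolding G_def by (simp flip: exp_add)
  then have absorb: "Xsb_weight s b (fst \<zeta>) (snd \<zeta>) * G \<le> Q"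
    using mult_right_mono[OF weight_le, of G] by (simp add: G_def mult.assoc)
  have "0 \<le> C0 * G" by (simp add: C0_def G_def)
  from mult_left_mono[OF absorb this] show ?thesis
    unfolding fourier_sq C0_def[symmetric] G_def[symmetric] by (simp add: mult_ac)
qed

lemma Xsb_sq_wave_packet_le:
  fixes k :: "real^'n"
  assumes \<alpha>: "\<alpha> > 0" and \<gamma>: "\<gamma> > 0" and Q: "Q \<ge> 0"
    and weight_le: "\<And>\<xi> \<tau>. Xsb_weight s b \<xi> \<tau> \<le> Q * exp ((norm (\<xi> - k))\<^sup>2 / (2 * \<alpha>\<^sup>2) + (\<tau> - w)\<^sup>2 / (2 * \<gamma>\<^sup>2))"
  shows "Xsb_sq s b (wave_packet (\<alpha>\<^sup>2) (\<gamma>\<^sup>2) k w) \<le> ennreal ((2 * pi * sqrt (2 * pi)) ^ (CARD('n) + 1) * Q / (\<alpha> ^ CARD('n) * \<gamma>))"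
proof -
  define C0 where "C0 = (2 * pi / \<alpha>\<^sup>2) ^ CARD('n) * (2 * pi / \<gamma>\<^sup>2)"
  define G where "G \<zeta> = exp (- (norm (fst \<zeta> - k))\<^sup>2 / (2 * \<alpha>\<^sup>2) - (snd \<zeta> - w)\<^sup>2 / (2 * \<gamma>\<^sup>2))"
    for \<zeta> :: "(real^'n) \<times> real"
  have C0: "C0 \<ge> 0" unfolding C0_def by simp
  have G_measurable: "G \<in> borel_measurable borel"
    unfolding G_def by (intro borel_measurable_continuous_onI continuous_intros) (use \<alpha> \<gamma> in auto)
  have "Xsb_sq s b (wave_packet (\<alpha>\<^sup>2) (\<gamma>\<^sup>2) k w) \<le> (\<integral>\<^sup>+\<zeta>. ennreal (C0 * Q) * ennreal (G \<zeta>) \<partial>lborel)"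
    unfolding Xsb_sq_eq_nn_integral_weight
  proof (intro nn_integral_mono)
    fix \<zeta> :: "(real^'n) \<times> real"
    have "ennreal (C0 * Q) * ennreal (G \<zeta>) = ennreal (C0 * Q * G \<zeta>)"
      using C0 Q by (simp add: G_def ennreal_mult)
    then show "ennreal (Xsb_weight s b (fst \<zeta>) (snd \<zeta>) * (cmod (st_fourier (wave_packet (\<alpha>\<^sup>2) (\<gamma>\<^sup>2) k w) \<zeta>))\<^sup>2)
        \<le> ennreal (C0 * Q) * ennreal (G \<zeta>)"
      using Xsb_weight_mult_norm_st_fourier_wave_packet_le[OF \<alpha> \<gamma> weight_le]
      unfolding C0_def G_def by (simp add: ennreal_leI)
  qed
  also have "\<dots> = ennreal (C0 * Q) * (\<integral>\<^sup>+\<zeta>. ennreal (G \<zeta>) \<partial>lborel)"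
    using G_measurable by (intro nn_integral_cmult) measurable
  also have "(\<integral>\<^sup>+\<zeta>. ennreal (G \<zeta>) \<partial>lborel) = ennreal (sqrt (2 * pi * \<alpha>\<^sup>2) ^ CARD('n) * sqrt (2 * pi * \<gamma>\<^sup>2))"
    unfolding G_def using \<alpha> \<gamma> by (intro nn_integral_gaussian) auto
  also have "ennreal (C0 * Q) * ennreal (sqrt (2 * pi * \<alpha>\<^sup>2) ^ CARD('n) * sqrt (2 * pi * \<gamma>\<^sup>2))
      = ennreal (Q * (C0 * (sqrt (2 * pi * \<alpha>\<^sup>2) ^ CARD('n) * sqrt (2 * pi * \<gamma>\<^sup>2))))"
    using C0 Q by (simp add: ennreal_mult[symmetric] mult_ac)
  also have "C0 * (sqrt (2 * pi * \<alpha>\<^sup>2) ^ CARD('n) * sqrt (2 * pi * \<gamma>\<^sup>2))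
      = (2 * pi * sqrt (2 * pi)) ^ (CARD('n) + 1) / (\<alpha> ^ CARD('n) * \<gamma>)"
    unfolding C0_def by (rule gaussian_normalisation_product[OF \<alpha> \<gamma>])
  finally show ?thesis by (simp add: mult_ac)
qed

lemma norm_st_fourier_wave_packet_ge_on_box:
  fixes k :: "real^'n"
  assumes \<alpha>: "\<alpha> > 0" and \<gamma>: "\<gamma> > 0"
    and \<xi>: "\<xi> - k \<in> cbox ((\<alpha> / 2) *\<^sub>R One) (\<alpha> *\<^sub>R One)" and \<tau>: "\<tau> - w \<in> {\<gamma> / 2 .. \<gamma>}"
  shows "(2 * pi / (3 * \<alpha>\<^sup>2)) ^ CARD('n) * (2 * pi / (3 * \<gamma>\<^sup>2)) * exp (- (real CARD('n) + 1) / 3)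
    \<le> (cmod (st_fourier (wave_packet (3 * \<alpha>\<^sup>2) (3 * \<gamma>\<^sup>2) k w) (\<xi>, \<tau>)))\<^sup>2"
proof -
  have "\<bar>(\<xi> - k) \<bullet> i\<bar> \<le> \<alpha>" if "i \<in> Basis" for i
    using \<xi> that \<alpha> by (auto simp: mem_box)
  then have "(norm (\<xi> - k))\<^sup>2 \<le> CARD('n) * \<alpha>\<^sup>2"
    using norm_power2_le_DIM[of "\<xi> - k" \<alpha>] by simp
  then have "(norm (\<xi> - k))\<^sup>2 / (3 * \<alpha>\<^sup>2) \<le> CARD('n) / 3"
    using \<alpha> by (simp add: divide_simps)
  moreover have "(\<tau> - w)\<^sup>2 \<le> \<gamma>\<^sup>2"
    using \<tau> \<gamma> by (intro power_mono) auto
  then have "(\<tau> - w)\<^sup>2 / (3 * \<gamma>\<^sup>2) \<le> 1 / 3"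
    using \<gamma> by (simp add: divide_simps)
  ultimately have "- (real CARD('n) + 1) / 3 \<le> - (norm (\<xi> - k))\<^sup>2 / (3 * \<alpha>\<^sup>2) - (\<tau> - w)\<^sup>2 / (3 * \<gamma>\<^sup>2)"
    by (simp add: field_simps)
  then have "exp (- (real CARD('n) + 1) / 3) \<le> exp (- (norm (\<xi> - k))\<^sup>2 / (3 * \<alpha>\<^sup>2) - (\<tau> - w)\<^sup>2 / (3 * \<gamma>\<^sup>2))"
    by simp
  moreover have "3 * \<alpha>\<^sup>2 > 0" and "3 * \<gamma>\<^sup>2 > 0" using \<alpha> \<gamma> by auto
  ultimately show ?thesis
    unfolding norm_st_fourier_wave_packet[OF \<open>3 * \<alpha>\<^sup>2 > 0\<close> \<open>3 * \<gamma>\<^sup>2 > 0\<close>] fst_conv snd_conv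
    by (intro mult_left_mono) auto
qed

lemma Xsb_sq_wave_packet_ge:
  fixes k :: "real^'n"
  assumes \<alpha>: "\<alpha> > 0" and \<gamma>: "\<gamma> > 0" and L: "L \<ge> 0"
    and weight_ge: "\<And>\<xi> \<tau>. \<xi> - k \<in> cbox ((\<alpha> / 2) *\<^sub>R One) (\<alpha> *\<^sub>R One) \<Longrightarrow> \<tau> - w \<in> {\<gamma> / 2 .. \<gamma>} \<Longrightarrow>
        L \<le> Xsb_weight s b \<xi> \<tau>"
  shows "ennreal ((pi / 3) ^ (CARD('n) + 1) * exp (- (real CARD('n) + 1) / 3) * L / (\<alpha> ^ CARD('n) * \<gamma>))
    \<le> Xsb_sq s b (wave_packet (3 * \<alpha>\<^sup>2) (3 * \<gamma>\<^sup>2) k w)"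
proof -
  define C0 where "C0 = (2 * pi / (3 * \<alpha>\<^sup>2)) ^ CARD('n) * (2 * pi / (3 * \<gamma>\<^sup>2)) * exp (- (real CARD('n) + 1) / 3)"
  have C0: "C0 \<ge> 0" unfolding C0_def by simp
  define B where "B = cbox (k + (\<alpha> / 2) *\<^sub>R One, w + \<gamma> / 2) (k + \<alpha> *\<^sub>R One, w + \<gamma>)"
  have B_iff: "\<zeta> \<in> B \<longleftrightarrow> fst \<zeta> - k \<in> cbox ((\<alpha> / 2) *\<^sub>R One) (\<alpha> *\<^sub>R One) \<and> snd \<zeta> - w \<in> {\<gamma> / 2 .. \<gamma>}"
    for \<zeta> :: "(real^'n) \<times> real"
    unfolding B_def cbox_Pair_eq by (cases \<zeta>) (auto simp: mem_box inner_add_left inner_diff_left)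
  have "emeasure lborel B = (\<Prod>\<beta>\<in>Basis. ((k + \<alpha> *\<^sub>R One, w + \<gamma>) - (k + (\<alpha> / 2) *\<^sub>R One, w + \<gamma> / 2)) \<bullet> \<beta>)"
    unfolding B_def using \<alpha> \<gamma> by (intro emeasure_lborel_cbox) (auto simp: Basis_prod_def inner_add_left)
  also have "\<dots> = (\<alpha> / 2) ^ CARD('n) * (\<gamma> / 2)"
    by (simp add: prod_Basis_prod_split inner_Pair_0 inner_diff_left inner_add_left)
  finally have measure_B: "emeasure lborel B = ennreal ((\<alpha> / 2) ^ CARD('n) * (\<gamma> / 2))" by simp
  have pointwise: "C0 * L \<le> Xsb_weight s b (fst \<zeta>) (snd \<zeta>) * (cmod (st_fourier (wave_packet (3 * \<alpha>\<^sup>2) (3 * \<gamma>\<^sup>2) k w) \<zeta>))\<^sup>2"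
    if "\<zeta> \<in> B" for \<zeta>
  proof -
    have box: "fst \<zeta> - k \<in> cbox ((\<alpha> / 2) *\<^sub>R One) (\<alpha> *\<^sub>R One)" "snd \<zeta> - w \<in> {\<gamma> / 2 .. \<gamma>}"
      using that B_iff by auto
    have "C0 \<le> (cmod (st_fourier (wave_packet (3 * \<alpha>\<^sup>2) (3 * \<gamma>\<^sup>2) k w) \<zeta>))\<^sup>2"
      using norm_st_fourier_wave_packet_ge_on_box[OF \<alpha> \<gamma> box] unfolding C0_def by simp
    from mult_mono[OF weight_ge[OF box] this order_trans[OF L weight_ge[OF box]] C0] show ?thesis
      by (simp add: mult.commute)
  qed
  have "ennreal (C0 * L) * emeasure lborel B
      = (\<integral>\<^sup>+\<zeta>. ennreal (C0 * L) * indicator B \<zeta> \<partial>lborel)"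
    by (simp add: B_def nn_integral_cmult_indicator)
  also have "\<dots> \<le> Xsb_sq s b (wave_packet (3 * \<alpha>\<^sup>2) (3 * \<gamma>\<^sup>2) k w)"
    unfolding Xsb_sq_eq_nn_integral_weight using pointwise
    by (intro nn_integral_mono) (auto simp: ennreal_leI split: split_indicator)
  finally show ?thesis
    unfolding measure_B C0_def using \<alpha> \<gamma> L
    by (simp add: ennreal_mult[symmetric] power_divide power2_eq_square field_simps)
qed

section \<open>Estimates for the weight\<close>

lemma one_plus_powr_le_exp:
  fixes r m t :: real
  assumes r: "r \<ge> 0" and m: "m \<ge> 0" and t: "t > 0"
  shows "(1 + r) powr m \<le> exp (m\<^sup>2 / (4 * t)) * exp (t * r\<^sup>2)"
proof -
  have "(1 + r) powr m \<le> (exp r) powr m"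
    using r m by (intro powr_mono2) (auto simp: exp_ge_add_one_self add.commute)
  also have "\<dots> = exp (m * r)" by (simp add: powr_def mult.commute)
  also have "m * r \<le> m\<^sup>2 / (4 * t) + t * r\<^sup>2"
  proof -
    have "0 \<le> (m - 2 * t * r)\<^sup>2 / (4 * t)" using t by simp
    also have "(m - 2 * t * r)\<^sup>2 / (4 * t) = m\<^sup>2 / (4 * t) + t * r\<^sup>2 - m * r"
      using t by (simp add: power2_eq_square field_simps)
    finally show ?thesis by simp
  qed
  finally show ?thesis by (simp add: exp_add)
qed

lemma exp_neg_square_le_powr:
  fixes y m :: real
  assumes y: "y \<ge> 1" and m: "m \<ge> 0"
  shows "exp (- y\<^sup>2 / 16) \<le> exp (4 * m\<^sup>2) * y powr (- m)"
proof -
  have "y powr m \<le> (1 + y) powr m" using y m by (intro powr_mono2) auto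
  also have "\<dots> \<le> exp (4 * m\<^sup>2) * exp (y\<^sup>2 / 16)"
    using one_plus_powr_le_exp[of y m "1 / 16"] y m by (simp add: mult.commute)
  finally have "y powr m * exp (- y\<^sup>2 / 16) \<le> exp (4 * m\<^sup>2)"
    by (simp add: exp_minus divide_simps)
  then show ?thesis using y by (simp add: powr_minus divide_simps mult.commute)
qed

lemma powr_ge_of_between:
  fixes x K \<rho> t :: real
  assumes K: "K > 0" and lower: "K \<le> x" and upper: "x \<le> \<rho> * K" and \<rho>: "\<rho> \<ge> 1"
  shows "\<rho> powr (- \<bar>t\<bar>) * K powr t \<le> x powr t"
proof (cases "t \<ge> 0")
  case True
  have "\<rho> powr (- \<bar>t\<bar>) * K powr t \<le> 1 * K powr t"
    using \<rho> True by (intro mult_right_mono) (auto simp: powr_minus_divide ge_one_powr_ge_zero)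
  also have "\<dots> \<le> x powr t" using K lower True by (simp add: powr_mono2)
  finally show ?thesis .
next
  case False
  have "\<rho> powr (- \<bar>t\<bar>) * K powr t = (\<rho> * K) powr t"
    using False K \<rho> by (simp add: powr_mult)
  also have "\<dots> \<le> x powr t" using False K lower upper by (intro powr_mono2') auto
  finally show ?thesis .
qed

lemma space_weight_le_of_nonneg:
  fixes \<xi> k :: "'a::real_normed_vector"
  assumes s: "s \<ge> 0" and N: "N > 0" and N_le: "N \<le> 1 + norm k"
  shows "(1 + norm \<xi>) powr (2 * s) \<le> (1 + norm k) powr (2 * s) * exp (4 * s\<^sup>2) * exp ((norm (\<xi> - k))\<^sup>2 / (4 * N\<^sup>2))"
proof -
  define r where "r = norm (\<xi> - k) / N"
  have r: "r \<ge> 0" unfolding r_def using N by simp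
  have "norm \<xi> \<le> norm k + N * r"
    using norm_triangle_ineq[of k "\<xi> - k"] N unfolding r_def by simp
  also have "\<dots> \<le> norm k + (1 + norm k) * r"
    using N_le r by (intro add_left_mono mult_right_mono) auto
  finally have "1 + norm \<xi> \<le> (1 + norm k) * (1 + r)" by (simp add: algebra_simps)
  then have "(1 + norm \<xi>) powr (2 * s) \<le> ((1 + norm k) * (1 + r)) powr (2 * s)"
    using s by (intro powr_mono2) auto
  also have "\<dots> = (1 + norm k) powr (2 * s) * (1 + r) powr (2 * s)"
    using r by (simp add: powr_mult)
  also have "(1 + r) powr (2 * s) \<le> exp (4 * s\<^sup>2) * exp (r\<^sup>2 / 4)"
    using one_plus_powr_le_exp[of r "2 * s" "1 / 4"] r s by (simp add: power_mult_distrib)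
  then have "(1 + norm k) powr (2 * s) * (1 + r) powr (2 * s) \<le> (1 + norm k) powr (2 * s) * (exp (4 * s\<^sup>2) * exp (r\<^sup>2 / 4))"
    by (rule mult_left_mono) simp
  also have "r\<^sup>2 / 4 = (norm (\<xi> - k))\<^sup>2 / (4 * N\<^sup>2)"
    unfolding r_def by (simp add: power_divide)
  finally show ?thesis by (simp add: mult.assoc)
qed

lemma space_weight_le_of_nonpos:
  fixes \<xi> k :: "'a::real_normed_vector"
  assumes s: "s \<le> 0" and K: "K > 0" and N: "N > 0" and K_le: "K \<le> norm k"
  shows "(1 + norm \<xi>) powr (2 * s) \<le> ((K / 2) powr (2 * s) + exp (- K\<^sup>2 / (16 * N\<^sup>2))) * exp ((norm (\<xi> - k))\<^sup>2 / (4 * N\<^sup>2))"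
proof (cases "norm (\<xi> - k) \<le> K / 2")
  case True
  have "K / 2 \<le> norm \<xi>"
    using norm_triangle_ineq4[of \<xi> "\<xi> - k"] True K_le by simp
  then have "(1 + norm \<xi>) powr (2 * s) \<le> (K / 2) powr (2 * s)"
    using s K by (intro powr_mono2') auto
  also have "\<dots> \<le> ((K / 2) powr (2 * s) + exp (- K\<^sup>2 / (16 * N\<^sup>2))) * exp ((norm (\<xi> - k))\<^sup>2 / (4 * N\<^sup>2))"
    by (rule order_trans[OF _ mult_left_mono[of 1]]) auto
  finally show ?thesis .
next
  case False
  have "(1 + norm \<xi>) powr (2 * s) \<le> 1"
    using powr_mono[of "2 * s" 0 "1 + norm \<xi>"] s by (auto split: if_splits)
  also have "1 \<le> exp (- K\<^sup>2 / (16 * N\<^sup>2)) * exp ((norm (\<xi> - k))\<^sup>2 / (4 * N\<^sup>2))"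
  proof -
    have "(K / 2)\<^sup>2 \<le> (norm (\<xi> - k))\<^sup>2" using False K by (intro power_mono) auto
    then have "K\<^sup>2 / (16 * N\<^sup>2) \<le> (norm (\<xi> - k))\<^sup>2 / (4 * N\<^sup>2)"
      using N by (simp add: power_divide divide_simps)
    then show ?thesis by (simp flip: exp_add)
  qed
  also have "\<dots> \<le> ((K / 2) powr (2 * s) + exp (- K\<^sup>2 / (16 * N\<^sup>2))) * exp ((norm (\<xi> - k))\<^sup>2 / (4 * N\<^sup>2))"
    by (intro mult_right_mono) auto
  finally show ?thesis .
qed

lemma paraboloid_distance_le:
  fixes \<xi> k :: "'a::real_inner"
  assumes N: "N > 0" and M: "M \<ge> 1"
  shows "1 + \<bar>\<tau> + (norm \<xi>)\<^sup>2\<bar>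
    \<le> (M + norm k * N + N\<^sup>2) * ((1 + \<bar>\<tau> + (norm k)\<^sup>2\<bar> / M) * (1 + norm (\<xi> - k) / N)\<^sup>2)"
proof -
  define r where "r = norm (\<xi> - k) / N"
  define \<beta> where "\<beta> = \<bar>\<tau> + (norm k)\<^sup>2\<bar> / M"
  define P where "P = M + norm k * N + N\<^sup>2"
  have r: "r \<ge> 0" and \<beta>: "\<beta> \<ge> 0" unfolding r_def \<beta>_def using N M by auto
  have "\<tau> + (norm \<xi>)\<^sup>2 = (\<tau> + (norm k)\<^sup>2) + 2 * (k \<bullet> (\<xi> - k)) + (norm (\<xi> - k))\<^sup>2"
    unfolding power2_norm_eq_inner by (simp add: inner_diff_left inner_diff_right inner_commute algebra_simps)
  moreover have "\<bar>k \<bullet> (\<xi> - k)\<bar> \<le> norm k * N * r"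
    using Cauchy_Schwarz_ineq2[of k "\<xi> - k"] N unfolding r_def by simp
  moreover have "\<bar>\<tau> + (norm k)\<^sup>2\<bar> = M * \<beta>" and "(norm (\<xi> - k))\<^sup>2 = N\<^sup>2 * r\<^sup>2"
    unfolding r_def \<beta>_def using N M by (auto simp: power_divide)
  ultimately have "1 + \<bar>\<tau> + (norm \<xi>)\<^sup>2\<bar> \<le> 1 + M * \<beta> + 2 * (norm k * N * r) + N\<^sup>2 * r\<^sup>2"
    using zero_le_power2[of "norm (\<xi> - k)"] by linarith
  moreover have "1 \<le> P" "M * \<beta> \<le> P * \<beta>" "norm k * N * r \<le> P * r" "N\<^sup>2 * r\<^sup>2 \<le> P * r\<^sup>2"
    unfolding P_def using M N r \<beta> by (auto intro!: mult_right_mono simp: add_increasing2)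
  moreover have "P * ((1 + \<beta>) * (1 + r)\<^sup>2) = P + P * \<beta> + 2 * (P * r) + P * r\<^sup>2 + P * \<beta> * (2 * r + r\<^sup>2)"
    by (simp add: power2_eq_square algebra_simps)
  moreover have "0 \<le> P * \<beta> * (2 * r + r\<^sup>2)" unfolding P_def using M N r \<beta> by simp
  ultimately show ?thesis unfolding P_def r_def \<beta>_def by linarith
qed

lemma powr_paraboloid_factor_le_exp:
  fixes r \<beta> B :: real
  assumes r: "r \<ge> 0" and \<beta>: "\<beta> \<ge> 0" and B: "B \<ge> 0"
  shows "((1 + \<beta>) * (1 + r)\<^sup>2) powr (2 * B) \<le> exp (18 * B\<^sup>2) * exp (r\<^sup>2 / 4 + \<beta>\<^sup>2 / 2)"
proof -
  have "((1 + r)\<^sup>2) powr (2 * B) = ((1 + r) powr 2) powr (2 * B)"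
    using r by (simp add: powr_realpow)
  also have "\<dots> = (1 + r) powr (4 * B)"
    by (simp add: powr_powr)
  finally have square: "((1 + r)\<^sup>2) powr (2 * B) = (1 + r) powr (4 * B)" .
  have "0 \<le> 1 + \<beta>" "0 \<le> (1 + r)\<^sup>2" using r \<beta> by auto
  then have "((1 + \<beta>) * (1 + r)\<^sup>2) powr (2 * B) = (1 + \<beta>) powr (2 * B) * (1 + r) powr (4 * B)"
    by (simp only: powr_mult square)
  also have "\<dots> \<le> (exp (2 * B\<^sup>2) * exp (\<beta>\<^sup>2 / 2)) * (exp (16 * B\<^sup>2) * exp (r\<^sup>2 / 4))"
  proof -
    have "(1 + \<beta>) powr (2 * B) \<le> exp (2 * B\<^sup>2) * exp (\<beta>\<^sup>2 / 2)"
      using one_plus_powr_le_exp[OF \<beta>, of "2 * B" "1 / 2"] B by (simp add: power_mult_distrib)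
    moreover have "(1 + r) powr (4 * B) \<le> exp (16 * B\<^sup>2) * exp (r\<^sup>2 / 4)"
      using one_plus_powr_le_exp[OF r, of "4 * B" "1 / 4"] B by (simp add: power_mult_distrib)
    ultimately show ?thesis by (intro mult_mono) auto
  qed
  also have "\<dots> = (exp (2 * B\<^sup>2) * exp (16 * B\<^sup>2)) * (exp (\<beta>\<^sup>2 / 2) * exp (r\<^sup>2 / 4))"
    by (simp only: mult_ac)
  also have "\<dots> = exp (18 * B\<^sup>2) * exp (r\<^sup>2 / 4 + \<beta>\<^sup>2 / 2)"
    by (simp flip: exp_add)
  finally show ?thesis .
qed

lemma time_weight_le:
  fixes \<xi> k :: "'a::real_inner"
  assumes N: "N > 0" and M: "M \<ge> 1"
  shows "(1 + \<bar>\<tau> + (norm \<xi>)\<^sup>2\<bar>) powr (2 * b)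
    \<le> (M + norm k * N + N\<^sup>2) powr (2 * max b 0) * exp (18 * (max b 0)\<^sup>2)
       * exp ((norm (\<xi> - k))\<^sup>2 / (4 * N\<^sup>2) + (\<tau> + (norm k)\<^sup>2)\<^sup>2 / (2 * M\<^sup>2))"
proof -
  define B where "B = max b 0"
  define r where "r = norm (\<xi> - k) / N"
  define \<beta> where "\<beta> = \<bar>\<tau> + (norm k)\<^sup>2\<bar> / M"
  define P where "P = M + norm k * N + N\<^sup>2"
  have B: "B \<ge> 0" unfolding B_def by simp
  have r: "r \<ge> 0" and \<beta>: "\<beta> \<ge> 0" unfolding r_def \<beta>_def using N M by auto
  have P: "P \<ge> 1" unfolding P_def using M N by (simp add: add_increasing2)
  have "(1 + \<bar>\<tau> + (norm \<xi>)\<^sup>2\<bar>) powr (2 * b) \<le> (1 + \<bar>\<tau> + (norm \<xi>)\<^sup>2\<bar>) powr (2 * B)"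
    unfolding B_def by (intro powr_mono) auto
  also have "\<dots> \<le> (P * ((1 + \<beta>) * (1 + r)\<^sup>2)) powr (2 * B)"
    using paraboloid_distance_le[OF N M, of \<tau> \<xi> k] B unfolding P_def r_def \<beta>_def
    by (intro powr_mono2) auto
  also have "\<dots> = P powr (2 * B) * ((1 + \<beta>) * (1 + r)\<^sup>2) powr (2 * B)"
    using P r \<beta> by (simp add: powr_mult)
  also have "\<dots> \<le> P powr (2 * B) * (exp (18 * B\<^sup>2) * exp (r\<^sup>2 / 4 + \<beta>\<^sup>2 / 2))"
    using powr_paraboloid_factor_le_exp[OF r \<beta> B] by (rule mult_left_mono) simp
  also have "r\<^sup>2 / 4 + \<beta>\<^sup>2 / 2 = (norm (\<xi> - k))\<^sup>2 / (4 * N\<^sup>2) + (\<tau> + (norm k)\<^sup>2)\<^sup>2 / (2 * M\<^sup>2)"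
    unfolding r_def \<beta>_def by (simp add: power_divide)
  finally show ?thesis unfolding P_def B_def by (simp only: mult.assoc)
qed

lemma norm_scaleR_One: "norm (c *\<^sub>R (One :: 'a::euclidean_space)) = \<bar>c\<bar> * sqrt DIM('a)"
proof -
  have "(norm (One :: 'a))\<^sup>2 = DIM('a)"
    by (simp add: norm_power2_eq_sum_Basis inner_sum_left inner_Basis sum.delta)
  then have "norm (One :: 'a) = sqrt DIM('a)"
    by (metis norm_ge_zero real_sqrt_unique)
  then show ?thesis by simp
qed

lemma space_weight_ge_on_box:
  fixes \<xi> :: "real^'n" and N K s :: real
  assumes N: "0 < N" and NK: "N \<le> K" and K: "1 \<le> K"
    and \<xi>: "\<xi> - K *\<^sub>R One \<in> cbox ((N / 2) *\<^sub>R One) (N *\<^sub>R One)"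
  shows "(1 + 2 * real CARD('n)) powr (- \<bar>2 * s\<bar>) * K powr (2 * s) \<le> (1 + norm \<xi>) powr (2 * s)"
proof (rule powr_ge_of_between)
  have \<xi>_Basis: "K \<le> \<xi> \<bullet> i \<and> \<xi> \<bullet> i \<le> 2 * K" if "i \<in> Basis" for i
    using \<xi> that N NK by (auto simp: mem_box inner_diff_left inner_sum_left inner_Basis sum.delta)
  obtain i :: "real^'n" where i: "i \<in> Basis" using nonempty_Basis by blast
  have "K \<le> norm \<xi>" using \<xi>_Basis[OF i] Basis_le_norm[OF i, of \<xi>] by linarith
  then show "K \<le> 1 + norm \<xi>" by simp
  have "\<bar>\<xi> \<bullet> i\<bar> \<le> 2 * K" if "i \<in> Basis" for i
    using \<xi>_Basis[OF that] K by auto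
  then have "norm \<xi> \<le> CARD('n) * (2 * K)"
    using norm_le_l1[of \<xi>] sum_bounded_above[of Basis "\<lambda>i. \<bar>\<xi> \<bullet> i\<bar>" "2 * K"] by simp
  then show "1 + norm \<xi> \<le> (1 + 2 * real CARD('n)) * K" using K by (simp add: algebra_simps)
qed (use K in auto)

lemma time_weight_ge_on_box:
  fixes \<xi> :: "real^'n" and N K b \<tau> :: real
  assumes N: "1 \<le> N" and NK: "N \<le> K"
    and \<xi>: "\<xi> - K *\<^sub>R One \<in> cbox ((N / 2) *\<^sub>R One) (N *\<^sub>R One)"
    and \<tau>: "\<tau> + (norm (K *\<^sub>R (One :: real^'n)))\<^sup>2 \<in> {K * N / 2 .. K * N}"
  shows "(4 + 6 * real CARD('n)) powr (- \<bar>2 * b\<bar>) * (K * N / 2) powr (2 * b) \<le> (1 + \<bar>\<tau> + (norm \<xi>)\<^sup>2\<bar>) powr (2 * b)"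
proof -
  define n where "n = real CARD('n)"
  define k :: "real^'n" where "k = K *\<^sub>R One"
  define \<eta> where "\<eta> = \<xi> - k"
  define M where "M = K * N"
  have n: "n \<ge> 1" unfolding n_def by simp
  have K: "K \<ge> 1" using N NK by linarith
  have M: "M \<ge> 1" unfolding M_def using mult_mono[OF K N] K by simp
  have \<eta>_Basis: "N / 2 \<le> \<eta> \<bullet> i \<and> \<eta> \<bullet> i \<le> N" if "i \<in> Basis" for i
    using \<xi> that unfolding \<eta>_def k_def by (auto simp: mem_box)
  have "k \<bullet> \<eta> = (\<Sum>i\<in>Basis. (k \<bullet> i) * (\<eta> \<bullet> i))" by (rule euclidean_inner)
  also have "\<dots> = (\<Sum>i\<in>Basis. K * (\<eta> \<bullet> i))"
    unfolding k_def by (rule sum.cong) (simp_all add: inner_sum_left inner_Basis sum.delta)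
  moreover have "0 \<le> K * (\<eta> \<bullet> i)" "K * (\<eta> \<bullet> i) \<le> M" if "i \<in> Basis" for i
    using \<eta>_Basis[OF that] K N unfolding M_def by (auto intro: mult_left_mono)
  ultimately have "0 \<le> k \<bullet> \<eta>" "k \<bullet> \<eta> \<le> n * M"
    using sum_bounded_above[of Basis "\<lambda>i. K * (\<eta> \<bullet> i)" M] unfolding n_def by (auto intro: sum_nonneg)
  moreover have "(norm \<eta>)\<^sup>2 \<le> n * M"
  proof -
    have "\<bar>\<eta> \<bullet> i\<bar> \<le> N" if "i \<in> Basis" for i using \<eta>_Basis[OF that] N by auto
    then have "(norm \<eta>)\<^sup>2 \<le> n * N\<^sup>2" using norm_power2_le_DIM[of \<eta> N] unfolding n_def by simp
    also have "\<dots> \<le> n * M" unfolding M_def using NK N n by (simp add: power2_eq_square mult_right_mono)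
    finally show ?thesis .
  qed
  moreover have "\<tau> + (norm \<xi>)\<^sup>2 = (\<tau> + (norm k)\<^sup>2) + 2 * (k \<bullet> \<eta>) + (norm \<eta>)\<^sup>2"
    unfolding \<eta>_def power2_norm_eq_inner by (simp add: inner_diff_left inner_diff_right inner_commute algebra_simps)
  moreover have "M / 2 \<le> \<tau> + (norm k)\<^sup>2" "\<tau> + (norm k)\<^sup>2 \<le> M"
    using \<tau> unfolding k_def M_def by auto
  ultimately have "M / 2 \<le> \<tau> + (norm \<xi>)\<^sup>2" "1 + (\<tau> + (norm \<xi>)\<^sup>2) \<le> 1 + M + 2 * (n * M) + n * M"
    using zero_le_power2[of "norm \<eta>"] by linarith+
  moreover have "1 + M + 2 * (n * M) + n * M \<le> (4 + 6 * n) * (M / 2)"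
    using M by (simp add: algebra_simps)
  ultimately have "M / 2 \<le> 1 + \<bar>\<tau> + (norm \<xi>)\<^sup>2\<bar>" "1 + \<bar>\<tau> + (norm \<xi>)\<^sup>2\<bar> \<le> (4 + 6 * n) * (M / 2)"
    using M by auto
  then show ?thesis
    unfolding n_def[symmetric] M_def[symmetric] using M n by (intro powr_ge_of_between) auto
qed

lemma Xsb_weight_ge_on_box:
  fixes \<xi> :: "real^'n" and N K s b \<tau> :: real
  assumes N: "1 \<le> N" and NK: "N \<le> K"
    and \<xi>: "\<xi> - K *\<^sub>R One \<in> cbox ((N / 2) *\<^sub>R One) (N *\<^sub>R One)"
    and \<tau>: "\<tau> + (norm (K *\<^sub>R (One :: real^'n)))\<^sup>2 \<in> {K * N / 2 .. K * N}"
  shows "(1 + 2 * real CARD('n)) powr (- (2 * \<bar>s\<bar>)) * (4 + 6 * real CARD('n)) powr (- (2 * \<bar>b\<bar>))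
           * K powr (2 * s) * (K * N / 2) powr (2 * b)
         \<le> Xsb_weight s b \<xi> \<tau>"
proof -
  have "(1 + 2 * real CARD('n)) powr (- \<bar>2 * s\<bar>) * K powr (2 * s) \<le> (1 + norm \<xi>) powr (2 * s)"
    using N NK \<xi> by (intro space_weight_ge_on_box) auto
  moreover have "(4 + 6 * real CARD('n)) powr (- \<bar>2 * b\<bar>) * (K * N / 2) powr (2 * b) \<le> (1 + \<bar>\<tau> + (norm \<xi>)\<^sup>2\<bar>) powr (2 * b)"
    using N NK \<xi> \<tau> by (rule time_weight_ge_on_box)
  ultimately have "(1 + 2 * real CARD('n)) powr (- \<bar>2 * s\<bar>) * K powr (2 * s)
      * ((4 + 6 * real CARD('n)) powr (- \<bar>2 * b\<bar>) * (K * N / 2) powr (2 * b)) \<le> Xsb_weight s b \<xi> \<tau>"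
    unfolding Xsb_weight_def by (intro mult_mono) auto
  then show ?thesis by (simp only: abs_mult mult_ac)
qed

section \<open>The test family\<close>

definition freq_centre :: "real \<Rightarrow> real \<Rightarrow> real^'n" where
  "freq_centre \<kappa> N = (N powr \<kappa>) *\<^sub>R One"

lemma norm_freq_centre: "norm (freq_centre \<kappa> N :: real^'n) = sqrt CARD('n) * N powr \<kappa>"
  unfolding freq_centre_def norm_scaleR_One by simp

lemma powr_collect_packet:
  fixes N :: real
  assumes N: "N > 0"
  shows "(N powr \<kappa>) powr x * (N powr (\<kappa> + 1)) powr y / (N ^ n * N powr (\<kappa> + 1))
       = N powr (\<kappa> * x + (\<kappa> + 1) * y - n - (\<kappa> + 1))"
proof -
  have "N ^ n * N powr (\<kappa> + 1) = N powr (n + (\<kappa> + 1))"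
    using N by (simp add: powr_add powr_realpow)
  then show ?thesis
    by (simp add: powr_powr powr_add[symmetric] powr_diff[symmetric] diff_diff_eq)
qed

lemma space_weight_le_packet_of_nonneg:
  fixes s \<kappa> :: real
  assumes s: "s \<ge> 0" and \<kappa>: "\<kappa> > 1"
  obtains c where "c \<ge> 0"
    and "\<And>N (\<xi> :: real^'n). 1 \<le> N \<Longrightarrow>
      (1 + norm \<xi>) powr (2 * s) \<le> c * (N powr \<kappa>) powr (2 * s) * exp ((norm (\<xi> - freq_centre \<kappa> N))\<^sup>2 / (4 * N\<^sup>2))"
proof -
  define c where "c = (1 + sqrt CARD('n)) powr (2 * s) * exp (4 * s\<^sup>2)"
  show ?thesis
  proof (rule that[of c])
    show "c \<ge> 0" unfolding c_def by simp
    fix N :: real and \<xi> :: "real^'n" assume N: "1 \<le> N"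
    define K where "K = N powr \<kappa>"
    have K: "N \<le> K" unfolding K_def using powr_mono[of 1 \<kappa> N] N \<kappa> by simp
    have k: "norm (freq_centre \<kappa> N :: real^'n) = sqrt CARD('n) * K"
      unfolding K_def by (rule norm_freq_centre)
    have "K * 1 \<le> K * sqrt CARD('n)" using K N by (intro mult_left_mono) auto
    then have N_le: "N \<le> 1 + norm (freq_centre \<kappa> N :: real^'n)"
      unfolding k using K by (simp add: mult.commute)
    have "1 + norm (freq_centre \<kappa> N :: real^'n) \<le> (1 + sqrt CARD('n)) * K"
      unfolding k using K N by (simp add: algebra_simps)
    then have "(1 + norm (freq_centre \<kappa> N :: real^'n)) powr (2 * s) \<le> ((1 + sqrt CARD('n)) * K) powr (2 * s)"
      using s by (intro powr_mono2) auto
    also have "\<dots> = (1 + sqrt CARD('n)) powr (2 * s) * K powr (2 * s)"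
      using K N by (simp add: powr_mult)
    finally have centre: "(1 + norm (freq_centre \<kappa> N :: real^'n)) powr (2 * s) \<le> (1 + sqrt CARD('n)) powr (2 * s) * K powr (2 * s)" .
    have "(1 + norm \<xi>) powr (2 * s) \<le> (1 + norm (freq_centre \<kappa> N :: real^'n)) powr (2 * s) * exp (4 * s\<^sup>2)
        * exp ((norm (\<xi> - freq_centre \<kappa> N))\<^sup>2 / (4 * N\<^sup>2))"
      using s N N_le by (intro space_weight_le_of_nonneg) auto
    also have "\<dots> \<le> (1 + sqrt CARD('n)) powr (2 * s) * K powr (2 * s) * exp (4 * s\<^sup>2)
        * exp ((norm (\<xi> - freq_centre \<kappa> N))\<^sup>2 / (4 * N\<^sup>2))"
      using centre by (intro mult_right_mono) auto
    finally show "(1 + norm \<xi>) powr (2 * s) \<le> c * K powr (2 * s) * exp ((norm (\<xi> - freq_centre \<kappa> N))\<^sup>2 / (4 * N\<^sup>2))"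
      unfolding c_def by (simp only: mult_ac)
  qed
qed

lemma gaussian_tail_le_powr:
  fixes N \<kappa> s :: real
  assumes N: "1 \<le> N" and \<kappa>: "\<kappa> > 1" and s: "s \<le> 0"
  shows "exp (- (N powr \<kappa>)\<^sup>2 / (16 * N\<^sup>2)) \<le> exp (4 * (2 * s * \<kappa> / (\<kappa> - 1))\<^sup>2) * (N powr \<kappa>) powr (2 * s)"
proof -
  define \<delta> where "\<delta> = \<kappa> - 1"
  define m where "m = - 2 * s * \<kappa> / \<delta>"
  have \<delta>: "\<delta> > 0" unfolding \<delta>_def using \<kappa> by simp
  have "0 \<le> (- 2 * s) * \<kappa>" using \<kappa> s by (simp add: mult_nonneg_nonpos)
  then have m: "m \<ge> 0" unfolding m_def using \<delta> by (intro divide_nonneg_pos) auto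
  have "(N powr \<kappa>)\<^sup>2 / (16 * N\<^sup>2) = (N powr \<kappa> / N)\<^sup>2 / 16"
    by (simp add: power_divide)
  also have "N powr \<kappa> / N = N powr \<delta>" unfolding \<delta>_def using N by (simp add: powr_diff)
  finally have "exp (- (N powr \<kappa>)\<^sup>2 / (16 * N\<^sup>2)) = exp (- (N powr \<delta>)\<^sup>2 / 16)"
    by simp
  also have "\<dots> \<le> exp (4 * m\<^sup>2) * (N powr \<delta>) powr (- m)"
    using exp_neg_square_le_powr[OF ge_one_powr_ge_zero[OF N less_imp_le[OF \<delta>]] m] .
  also have "(N powr \<delta>) powr (- m) = (N powr \<kappa>) powr (2 * s)"
    unfolding m_def using \<delta> by (simp add: powr_powr mult_ac)
  also have "m\<^sup>2 = (2 * s * \<kappa> / (\<kappa> - 1))\<^sup>2"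
    unfolding m_def \<delta>_def by (simp add: power2_eq_square)
  finally show ?thesis .
qed

lemma space_weight_le_packet_of_neg:
  fixes s \<kappa> :: real
  assumes s: "s < 0" and \<kappa>: "\<kappa> > 1"
  obtains c where "c \<ge> 0"
    and "\<And>N (\<xi> :: real^'n). 1 \<le> N \<Longrightarrow>
      (1 + norm \<xi>) powr (2 * s) \<le> c * (N powr \<kappa>) powr (2 * s) * exp ((norm (\<xi> - freq_centre \<kappa> N))\<^sup>2 / (4 * N\<^sup>2))"
proof
  define c where "c = 2 powr (- 2 * s) + exp (4 * (2 * s * \<kappa> / (\<kappa> - 1))\<^sup>2)"
  show "c \<ge> 0" unfolding c_def by simp
  fix N :: real and \<xi> :: "real^'n" assume N: "1 \<le> N"
  define K where "K = N powr \<kappa>"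
  have K: "K > 0" unfolding K_def using N by simp
  have "K \<le> norm (freq_centre \<kappa> N :: real^'n)"
    unfolding norm_freq_centre K_def[symmetric] using K by simp
  then have "(1 + norm \<xi>) powr (2 * s)
      \<le> ((K / 2) powr (2 * s) + exp (- K\<^sup>2 / (16 * N\<^sup>2))) * exp ((norm (\<xi> - freq_centre \<kappa> N))\<^sup>2 / (4 * N\<^sup>2))"
    using s K N by (intro space_weight_le_of_nonpos) auto
  also have "(K / 2) powr (2 * s) + exp (- K\<^sup>2 / (16 * N\<^sup>2)) \<le> c * K powr (2 * s)"
  proof -
    have "(K / 2) powr (2 * s) = 2 powr (- 2 * s) * K powr (2 * s)"
      using K by (simp add: powr_divide powr_minus_divide)
    then show ?thesis
      using gaussian_tail_le_powr[OF N \<kappa>, of s] s unfolding c_def K_def by (simp add: distrib_right)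
  qed
  finally show "(1 + norm \<xi>) powr (2 * s) \<le> c * K powr (2 * s) * exp ((norm (\<xi> - freq_centre \<kappa> N))\<^sup>2 / (4 * N\<^sup>2))"
    by (simp add: mult_right_mono)
qed

lemma space_weight_le_packet:
  fixes s \<kappa> :: real
  assumes \<kappa>: "\<kappa> > 1"
  obtains c where "c \<ge> 0"
    and "\<And>N (\<xi> :: real^'n). 1 \<le> N \<Longrightarrow>
      (1 + norm \<xi>) powr (2 * s) \<le> c * (N powr \<kappa>) powr (2 * s) * exp ((norm (\<xi> - freq_centre \<kappa> N))\<^sup>2 / (4 * N\<^sup>2))"
proof (cases "s \<ge> 0")
  case True
  from space_weight_le_packet_of_nonneg[OF True \<kappa>] that show ?thesis by blast
next
  case False
  then have "s < 0" by simp
  from space_weight_le_packet_of_neg[OF this \<kappa>] that show ?thesis by blast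
qed

lemma time_weight_le_packet:
  fixes b \<kappa> N \<tau> :: real and \<xi> :: "real^'n"
  assumes N: "1 \<le> N" and \<kappa>: "\<kappa> \<ge> 1"
  shows "(1 + \<bar>\<tau> + (norm \<xi>)\<^sup>2\<bar>) powr (2 * b)
    \<le> (2 + sqrt CARD('n)) powr (2 * max b 0) * exp (18 * (max b 0)\<^sup>2) * (N powr (\<kappa> + 1)) powr (2 * max b 0)
       * exp ((norm (\<xi> - freq_centre \<kappa> N))\<^sup>2 / (4 * N\<^sup>2)
              + (\<tau> + (norm (freq_centre \<kappa> N :: real^'n))\<^sup>2)\<^sup>2 / (2 * (N powr (\<kappa> + 1))\<^sup>2))"
proof -
  define B where "B = max b 0"
  define K where "K = N powr \<kappa>"
  define M where "M = N powr (\<kappa> + 1)"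
  define k :: "real^'n" where "k = freq_centre \<kappa> N"
  have K: "N \<le> K" unfolding K_def using powr_mono[of 1 \<kappa> N] N \<kappa> by simp
  have M: "M = K * N" unfolding M_def K_def using N by (simp add: powr_add)
  have M1: "M \<ge> 1" unfolding M using mult_mono[of 1 K 1 N] K N by simp
  have "M + norm k * N + N\<^sup>2 \<le> (2 + sqrt CARD('n)) * M"
    unfolding k_def norm_freq_centre K_def[symmetric] M
    using K N by (simp add: power2_eq_square algebra_simps mult_right_mono)
  then have "(M + norm k * N + N\<^sup>2) powr (2 * B) \<le> ((2 + sqrt CARD('n)) * M) powr (2 * B)"
    using N M1 by (intro powr_mono2) (auto simp: B_def)
  also have "\<dots> = (2 + sqrt CARD('n)) powr (2 * B) * M powr (2 * B)"
    using M1 by (simp add: powr_mult)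
  finally have P_le: "(M + norm k * N + N\<^sup>2) powr (2 * B) \<le> (2 + sqrt CARD('n)) powr (2 * B) * M powr (2 * B)" .
  have "(1 + \<bar>\<tau> + (norm \<xi>)\<^sup>2\<bar>) powr (2 * b)
      \<le> (M + norm k * N + N\<^sup>2) powr (2 * B) * exp (18 * B\<^sup>2)
         * exp ((norm (\<xi> - k))\<^sup>2 / (4 * N\<^sup>2) + (\<tau> + (norm k)\<^sup>2)\<^sup>2 / (2 * M\<^sup>2))"
    unfolding B_def using N M1 by (intro time_weight_le) auto
  also have "\<dots> \<le> (2 + sqrt CARD('n)) powr (2 * B) * M powr (2 * B) * exp (18 * B\<^sup>2)
         * exp ((norm (\<xi> - k))\<^sup>2 / (4 * N\<^sup>2) + (\<tau> + (norm k)\<^sup>2)\<^sup>2 / (2 * M\<^sup>2))"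
    using P_le by (intro mult_right_mono) auto
  finally show ?thesis unfolding B_def M_def k_def by (simp only: mult_ac)
qed

lemma Xsb_weight_le_packet:
  fixes s b \<kappa> :: real
  assumes \<kappa>: "\<kappa> > 1"
  obtains Q where "Q \<ge> 0"
    and "\<And>N (\<xi> :: real^'n) \<tau>. 1 \<le> N \<Longrightarrow> Xsb_weight s b \<xi> \<tau>
      \<le> Q * (N powr \<kappa>) powr (2 * s) * (N powr (\<kappa> + 1)) powr (2 * max b 0)
         * exp ((norm (\<xi> - freq_centre \<kappa> N))\<^sup>2 / (2 * N\<^sup>2)
                + (\<tau> + (norm (freq_centre \<kappa> N :: real^'n))\<^sup>2)\<^sup>2 / (2 * (N powr (\<kappa> + 1))\<^sup>2))"
proof -
  obtain c where c: "c \<ge> 0"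
    and space: "\<And>N (\<xi> :: real^'n). 1 \<le> N \<Longrightarrow>
      (1 + norm \<xi>) powr (2 * s) \<le> c * (N powr \<kappa>) powr (2 * s) * exp ((norm (\<xi> - freq_centre \<kappa> N))\<^sup>2 / (4 * N\<^sup>2))"
    using space_weight_le_packet[OF \<kappa>] by blast
  define B where "B = max b 0"
  show ?thesis
  proof (rule that[of "c * (2 + sqrt CARD('n)) powr (2 * B) * exp (18 * B\<^sup>2)"])
    show "0 \<le> c * (2 + sqrt CARD('n)) powr (2 * B) * exp (18 * B\<^sup>2)" using c by simp
    fix N :: real and \<xi> :: "real^'n" and \<tau> :: real assume N: "1 \<le> N"
    define k :: "real^'n" where "k = freq_centre \<kappa> N"
    define E where "E = (norm (\<xi> - k))\<^sup>2 / (4 * N\<^sup>2)"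
    define F where "F = (\<tau> + (norm k)\<^sup>2)\<^sup>2 / (2 * (N powr (\<kappa> + 1))\<^sup>2)"
    have "Xsb_weight s b \<xi> \<tau>
        \<le> (c * (N powr \<kappa>) powr (2 * s) * exp E)
           * ((2 + sqrt CARD('n)) powr (2 * B) * exp (18 * B\<^sup>2) * (N powr (\<kappa> + 1)) powr (2 * B) * exp (E + F))"
      unfolding Xsb_weight_def E_def F_def k_def B_def
      using space[OF N, of \<xi>] time_weight_le_packet[OF N less_imp_le[OF \<kappa>], of \<tau> \<xi> b] c
      by (intro mult_mono) auto
    also have "\<dots> = c * (2 + sqrt CARD('n)) powr (2 * B) * exp (18 * B\<^sup>2) * (N powr \<kappa>) powr (2 * s)
        * (N powr (\<kappa> + 1)) powr (2 * B) * (exp E * exp (E + F))"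
      by (simp only: mult_ac)
    also have "exp E * exp (E + F) = exp ((norm (\<xi> - k))\<^sup>2 / (2 * N\<^sup>2) + F)"
      unfolding E_def by (simp flip: exp_add)
    finally show "Xsb_weight s b \<xi> \<tau> \<le> c * (2 + sqrt CARD('n)) powr (2 * B) * exp (18 * B\<^sup>2)
        * (N powr \<kappa>) powr (2 * s) * (N powr (\<kappa> + 1)) powr (2 * max b 0)
        * exp ((norm (\<xi> - freq_centre \<kappa> N))\<^sup>2 / (2 * N\<^sup>2)
                + (\<tau> + (norm (freq_centre \<kappa> N :: real^'n))\<^sup>2)\<^sup>2 / (2 * (N powr (\<kappa> + 1))\<^sup>2))"
      unfolding k_def F_def B_def .
  qed
qed

definition test_packet :: "real \<Rightarrow> real \<Rightarrow> real \<Rightarrow> (real^'n) \<times> real \<Rightarrow> complex" where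
  "test_packet \<kappa> a N = wave_packet (a * N\<^sup>2) (a * (N powr (\<kappa> + 1))\<^sup>2) (freq_centre \<kappa> N)
     (- (norm (freq_centre \<kappa> N :: real^'n))\<^sup>2)"

lemma test_packet_cube:
  "test_packet \<kappa> a N z * cnj (test_packet \<kappa> a N z) * test_packet \<kappa> a N z = test_packet \<kappa> (3 * a) N z"
  unfolding test_packet_def wave_packet_cube by (simp only: mult.assoc)

text \<open>With \<open>K = N\<^sup>\<kappa>\<close>: the space weight contributes \<open>K\<^bsup>2s\<^esup>\<close>, the time weight \<open>(K N)\<^bsup>\<plusminus>2b\<^esup>\<close>
  (only its positive part for the upper bound), and the \<open>L\<^sup>2\<close> normalisation of the packet
  \<open>N\<^sup>-\<^sup>n (K N)\<^sup>-\<^sup>1\<close>.\<close>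
definition norm_exponent :: "nat \<Rightarrow> real \<Rightarrow> real \<Rightarrow> real \<Rightarrow> real" where
  "norm_exponent n s b \<kappa> = 2 * s * \<kappa> + 2 * max b 0 * (\<kappa> + 1) - n - (\<kappa> + 1)"

definition cube_exponent :: "nat \<Rightarrow> real \<Rightarrow> real \<Rightarrow> real \<Rightarrow> real" where
  "cube_exponent n s b \<kappa> = 2 * s * \<kappa> - 2 * b * (\<kappa> + 1) - n - (\<kappa> + 1)"

lemma Xsb_sq_test_packet_le:
  fixes s b \<kappa> :: real
  assumes \<kappa>: "\<kappa> > 1"
  obtains D where "D \<ge> 0"
    and "\<And>N. 1 \<le> N \<Longrightarrow>
      Xsb_sq s b (test_packet \<kappa> 1 N :: (real^'n) \<times> real \<Rightarrow> complex) \<le> ennreal (D * N powr norm_exponent CARD('n) s b \<kappa>)"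
proof -
  obtain Q where Q: "Q \<ge> 0"
    and weight: "\<And>N (\<xi> :: real^'n) \<tau>. 1 \<le> N \<Longrightarrow> Xsb_weight s b \<xi> \<tau>
      \<le> Q * (N powr \<kappa>) powr (2 * s) * (N powr (\<kappa> + 1)) powr (2 * max b 0)
         * exp ((norm (\<xi> - freq_centre \<kappa> N))\<^sup>2 / (2 * N\<^sup>2)
                + (\<tau> + (norm (freq_centre \<kappa> N :: real^'n))\<^sup>2)\<^sup>2 / (2 * (N powr (\<kappa> + 1))\<^sup>2))"
    using Xsb_weight_le_packet[OF \<kappa>] by blast
  define D where "D = (2 * pi * sqrt (2 * pi)) ^ (CARD('n) + 1) * Q"
  show ?thesis
  proof (rule that[of D])
    show "D \<ge> 0" unfolding D_def using Q by simp
    fix N :: real assume N: "1 \<le> N"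
    define Q' where "Q' = Q * (N powr \<kappa>) powr (2 * s) * (N powr (\<kappa> + 1)) powr (2 * max b 0)"
    have "Xsb_sq s b (test_packet \<kappa> 1 N :: (real^'n) \<times> real \<Rightarrow> complex)
        \<le> ennreal ((2 * pi * sqrt (2 * pi)) ^ (CARD('n) + 1) * Q' / (N ^ CARD('n) * N powr (\<kappa> + 1)))"
      unfolding Q'_def test_packet_def mult_1 by (rule Xsb_sq_wave_packet_le) (use N Q weight[OF N] in auto)
    also have "(2 * pi * sqrt (2 * pi)) ^ (CARD('n) + 1) * Q' / (N ^ CARD('n) * N powr (\<kappa> + 1))
        = D * ((N powr \<kappa>) powr (2 * s) * (N powr (\<kappa> + 1)) powr (2 * max b 0) / (N ^ CARD('n) * N powr (\<kappa> + 1)))"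
      unfolding Q'_def D_def by (simp add: mult_ac)
    also have "\<dots> = D * N powr norm_exponent CARD('n) s b \<kappa>"
      unfolding norm_exponent_def using N by (simp add: powr_collect_packet mult_ac)
    finally show "Xsb_sq s b (test_packet \<kappa> 1 N :: (real^'n) \<times> real \<Rightarrow> complex)
        \<le> ennreal (D * N powr norm_exponent CARD('n) s b \<kappa>)" .
  qed
qed

lemma Xsb_sq_test_packet_cube_ge:
  fixes s b \<kappa> :: real
  assumes \<kappa>: "\<kappa> > 1"
  obtains A where "A > 0"
    and "\<And>N. 1 \<le> N \<Longrightarrow>
      ennreal (A * N powr cube_exponent CARD('n) s b \<kappa>) \<le> Xsb_sq s (- b) (test_packet \<kappa> 3 N :: (real^'n) \<times> real \<Rightarrow> complex)"
proof -
  define c where "c = (1 + 2 * real CARD('n)) powr (- (2 * \<bar>s\<bar>)) * (4 + 6 * real CARD('n)) powr (- (2 * \<bar>- b\<bar>))"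
  define A where "A = (pi / 3) ^ (CARD('n) + 1) * exp (- (real CARD('n) + 1) / 3) * c * 2 powr (2 * b)"
  show ?thesis
  proof (rule that[of A])
    show "A > 0" unfolding A_def c_def by simp
    fix N :: real assume N: "1 \<le> N"
    define K where "K = N powr \<kappa>"
    define L where "L = c * K powr (2 * s) * (K * N / 2) powr (2 * - b)"
    have K: "N \<le> K" unfolding K_def using powr_mono[of 1 \<kappa> N] N \<kappa> by simp
    have M: "N powr (\<kappa> + 1) = K * N" unfolding K_def using N by (simp add: powr_add)
    have "ennreal ((pi / 3) ^ (CARD('n) + 1) * exp (- (real CARD('n) + 1) / 3) * L / (N ^ CARD('n) * N powr (\<kappa> + 1)))
        \<le> Xsb_sq s (- b) (test_packet \<kappa> 3 N :: (real^'n) \<times> real \<Rightarrow> complex)"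
      unfolding test_packet_def
    proof (rule Xsb_sq_wave_packet_ge)
      fix \<xi> :: "real^'n" and \<tau> :: real
      assume "\<xi> - freq_centre \<kappa> N \<in> cbox ((N / 2) *\<^sub>R One) (N *\<^sub>R One)"
        and "\<tau> - - (norm (freq_centre \<kappa> N :: real^'n))\<^sup>2 \<in> {N powr (\<kappa> + 1) / 2 .. N powr (\<kappa> + 1)}"
      then show "L \<le> Xsb_weight s (- b) \<xi> \<tau>"
        unfolding L_def c_def freq_centre_def K_def[symmetric] M using N K
        by (intro Xsb_weight_ge_on_box) auto
    qed (use N in \<open>auto simp: L_def c_def\<close>)
    also have "(pi / 3) ^ (CARD('n) + 1) * exp (- (real CARD('n) + 1) / 3) * L / (N ^ CARD('n) * N powr (\<kappa> + 1))
        = A * (K powr (2 * s) * (N powr (\<kappa> + 1)) powr (- 2 * b) / (N ^ CARD('n) * N powr (\<kappa> + 1)))"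
      unfolding L_def A_def M using K N by (simp add: powr_divide powr_minus_divide mult_ac)
    also have "\<dots> = A * N powr cube_exponent CARD('n) s b \<kappa>"
      unfolding K_def cube_exponent_def using N by (simp add: powr_collect_packet mult_ac)
    finally show "ennreal (A * N powr cube_exponent CARD('n) s b \<kappa>)
        \<le> Xsb_sq s (- b) (test_packet \<kappa> 3 N :: (real^'n) \<times> real \<Rightarrow> complex)" .
  qed
qed

lemma exists_powr_dominates:
  fixes A D p q :: real
  assumes A: "A > 0" and D: "D \<ge> 0" and qp: "q < p"
  obtains X where "X \<ge> 1" and "D * X powr q < A * X powr p"
proof
  define X where "X = max 1 ((D / A + 1) powr (1 / (p - q)))"
  show X: "X \<ge> 1" unfolding X_def by simp
  have "D / A + 1 = ((D / A + 1) powr (1 / (p - q))) powr (p - q)"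
    using A D qp by (simp add: powr_powr add_pos_nonneg)
  also have "\<dots> \<le> X powr (p - q)" unfolding X_def using qp by (intro powr_mono2) auto
  finally have "D / A + 1 \<le> X powr (p - q)" .
  then have "(D / A + 1) * X powr q \<le> X powr p"
    using X by (simp add: mult_right_mono powr_diff field_simps)
  moreover have "D * X powr q < A * ((D / A + 1) * X powr q)"
    using A X by (simp add: field_simps)
  ultimately show "D * X powr q < A * X powr p"
    using A by (smt (verit) mult_left_mono)
qed

lemma exists_exponent_gap:
  fixes s b :: real and n :: nat
  assumes s: "s \<le> real n / 2 - 1" and b: "b < 1 / 2"
  obtains \<kappa> where "\<kappa> > 1" and "3 * norm_exponent n s b \<kappa> < cube_exponent n s b \<kappa>"
proof
  define B where "B = max b 0"
  define f where "f = 2 * n + 4 - 4 * s - 4 * b - 12 * B"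
  define g where "g = 2 - 4 * s - 2 * b - 6 * B"
  define \<delta> where "\<delta> = f / (2 * (\<bar>g\<bar> + 1))"
  have f: "f > 0" unfolding f_def B_def using s b by (cases "b \<ge> 0") auto
  then have \<delta>: "\<delta> > 0" unfolding \<delta>_def by (simp add: add_pos_nonneg)
  show "1 + \<delta> > 1" using \<delta> by simp
  have "\<delta> * \<bar>g\<bar> \<le> f / 2"
    using f unfolding \<delta>_def by (simp add: field_simps add_pos_nonneg)
  moreover have "- (\<delta> * \<bar>g\<bar>) \<le> \<delta> * g"
    using mult_left_mono[of "- \<bar>g\<bar>" g \<delta>] \<delta> by simp
  moreover have "cube_exponent n s b (1 + \<delta>) - 3 * norm_exponent n s b (1 + \<delta>) = f + \<delta> * g"
    unfolding cube_exponent_def norm_exponent_def f_def g_def B_def by (simp add: algebra_simps)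
  ultimately show "3 * norm_exponent n s b (1 + \<delta>) < cube_exponent n s b (1 + \<delta>)"
    using f by linarith
qed

lemma trilinear_Xsb_estimate_fails:
  fixes s b \<kappa> A D p q :: real
  assumes upper: "\<And>N. 1 \<le> N \<Longrightarrow> Xsb_sq s b (test_packet \<kappa> 1 N :: (real^'n) \<times> real \<Rightarrow> complex) \<le> ennreal (D * N powr q)"
    and lower: "\<And>N. 1 \<le> N \<Longrightarrow> ennreal (A * N powr p) \<le> Xsb_sq s (-b) (test_packet \<kappa> 3 N :: (real^'n) \<times> real \<Rightarrow> complex)"
    and A: "A > 0" and D: "D \<ge> 0" and gap: "3 * q < p"
  shows "\<not> (\<exists>C::real. \<forall>f g h :: (real^'n) \<times> real \<Rightarrow> complex.
            admissible s b f \<longrightarrow> admissible s b g \<longrightarrow> admissible s b h \<longrightarrow>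
            Xsb_sq s (-b) (\<lambda>z. f z * cnj (g z) * h z)
              \<le> ennreal (C\<^sup>2) * Xsb_sq s b f * Xsb_sq s b g * Xsb_sq s b h)"
proof (intro notI, elim exE)
  fix C assume estimate: "\<forall>f g h :: (real^'n) \<times> real \<Rightarrow> complex.
            admissible s b f \<longrightarrow> admissible s b g \<longrightarrow> admissible s b h \<longrightarrow>
            Xsb_sq s (-b) (\<lambda>z. f z * cnj (g z) * h z)
              \<le> ennreal (C\<^sup>2) * Xsb_sq s b f * Xsb_sq s b g * Xsb_sq s b h"
  obtain N where N: "N \<ge> 1" and dominates: "C\<^sup>2 * D ^ 3 * N powr (3 * q) < A * N powr p"
    using exists_powr_dominates[OF A _ gap, of "C\<^sup>2 * D ^ 3"] D by auto
  define u :: "(real^'n) \<times> real \<Rightarrow> complex" where "u = test_packet \<kappa> 1 N"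
  have u_bound: "Xsb_sq s b u \<le> ennreal (D * N powr q)" unfolding u_def by (rule upper[OF N])
  have "admissible s b u"
    unfolding admissible_def
  proof (intro conjI exI allI)
    show "integrable lborel u" unfolding u_def test_packet_def using N by (simp add: integrable_wave_packet)
    show "cmod (u z) \<le> 1" for z unfolding u_def test_packet_def by (simp add: norm_wave_packet_le_1)
    show "Xsb_sq s b u < \<infinity>" using u_bound by (simp add: le_less_trans)
  qed
  then have estimate_u: "Xsb_sq s (-b) (\<lambda>z. u z * cnj (u z) * u z)
      \<le> ennreal (C\<^sup>2) * Xsb_sq s b u * Xsb_sq s b u * Xsb_sq s b u"
    using estimate by blast
  have "(\<lambda>z. u z * cnj (u z) * u z) = test_packet \<kappa> 3 N"
    unfolding u_def by (rule ext) (simp add: test_packet_cube[of \<kappa> 1 N, simplified])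
  then have "ennreal (A * N powr p) \<le> Xsb_sq s (-b) (\<lambda>z. u z * cnj (u z) * u z)"
    using lower[OF N] by simp
  also have "\<dots> \<le> ennreal (C\<^sup>2) * Xsb_sq s b u * Xsb_sq s b u * Xsb_sq s b u"
    by (rule estimate_u)
  also have "\<dots> \<le> ennreal (C\<^sup>2) * ennreal (D * N powr q) * ennreal (D * N powr q) * ennreal (D * N powr q)"
    using u_bound by (intro mult_mono) auto
  also have "\<dots> = ennreal (C\<^sup>2 * D ^ 3 * N powr (3 * q))"
  proof -
    have "N powr (3 * q) = N powr q * N powr q * N powr q" by (simp add: powr_add[symmetric])
    then show ?thesis using D N by (simp add: ennreal_mult[symmetric] power3_eq_cube mult_ac)
  qed
  finally have "A * N powr p \<le> C\<^sup>2 * D ^ 3 * N powr (3 * q)"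
    using D N by (subst (asm) ennreal_le_iff) auto
  with dominates show False by simp
qed

theorem theorem1p5:
  fixes s b :: real
  assumes "CARD('n) \<ge> 2"
    and "s \<le> real CARD('n) / 2 - 1"
    and "b < 1/2"
  shows "\<not> (\<exists>C::real. \<forall>f g h :: (real^'n) \<times> real \<Rightarrow> complex.
            admissible s b f \<longrightarrow> admissible s b g \<longrightarrow> admissible s b h \<longrightarrow>
            Xsb_sq s (-b) (\<lambda>z. f z * cnj (g z) * h z)
              \<le> ennreal (C\<^sup>2) * Xsb_sq s b f * Xsb_sq s b g * Xsb_sq s b h)"
proof -
  obtain \<kappa> where \<kappa>: "\<kappa> > 1" and gap: "3 * norm_exponent CARD('n) s b \<kappa> < cube_exponent CARD('n) s b \<kappa>"
    using exists_exponent_gap[OF assms(2,3)] by blast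
  obtain D where D: "D \<ge> 0" and upper: "\<And>N. 1 \<le> N \<Longrightarrow>
      Xsb_sq s b (test_packet \<kappa> 1 N :: (real^'n) \<times> real \<Rightarrow> complex) \<le> ennreal (D * N powr norm_exponent CARD('n) s b \<kappa>)"
    using Xsb_sq_test_packet_le[OF \<kappa>] by blast
  obtain A where A: "A > 0" and lower: "\<And>N. 1 \<le> N \<Longrightarrow>
      ennreal (A * N powr cube_exponent CARD('n) s b \<kappa>) \<le> Xsb_sq s (- b) (test_packet \<kappa> 3 N :: (real^'n) \<times> real \<Rightarrow> complex)"
    using Xsb_sq_test_packet_cube_ge[OF \<kappa>] by blast
  show ?thesis by (rule trilinear_Xsb_estimate_fails[OF upper lower A D gap])
qed

end
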